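(* Suppose $\sum_{m=0}^\infty2^{-\frac m2}\lambda_{d2^m}m^{\frac12}<\infty$ and the non-random initial values satisfy $\sum_{m=0}^\infty2^{-\frac m2}\max_{d2^m+1<i\le d2^{m+1}}|G_i(0)|\cdot\lambda_{d2^m}<\infty$. Then: (a) the process $X_t:=\sum_{i=1}^\infty G_i(\lambda_it)S_i$, $t\ge0$, has almost surely a continuous modification (as a $C_0([0,1];\mathbb R^d)$-valued process); (b) with $X^{(n)}_t:=\sum_{i=1}^nG_i(\lambda_it)S_i$, the finite dimensional distributions of $X^{(n)}$ converge weakly to those of $X$: for all $m\in\mathbb N$ and $0\le t_1<\dots<t_m$, the law of $(X^{(n)}_{t_1},\dots,X^{(n)}_{t_m})$ on $(C_0([0,1];\mathbb R^d))^m$ converges weakly to the law of $(X_{t_1},\dots,X_{t_m})$.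
   Context: Fix $d\in\mathbb N$, $(e_j)$ standard basis of $\mathbb R^d$. Haar functions: $H_1\equiv1$, $H_{2^m+k}=2^{m/2}$ on $[\frac{2k-2}{2^{m+1}},\frac{2k-1}{2^{m+1}})$, $-2^{m/2}$ on $[\frac{2k-1}{2^{m+1}},\frac{2k}{2^{m+1}})$, $0$ otherwise. $g_{d(r-1)+j}:=H_re_j$, $S_i(s):=\int_0^sg_i(u)du$. $C_0([0,1];\mathbb R^d)$: continuous $\gamma$ with $\gamma(0)=0$, sup norm. $0<\lambda_1\le\lambda_2\le\dots$ reals. $G_i$ are independent one-dimensional Ornstein–Uhlenbeck processes $dG_i=-G_i\,dt+\sqrt2\,dW_i$ with independent standard Wiener processes $W_i$ and non-random $G_i(0)$. *)

theory Defs
  imports "HOL-Probability.Probability"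
begin

text \<open>Haar functions indexed from 1: H 1 = 1, and for r = 2^m + k with 1 <= k <= 2^m,
  H r = 2^(m/2) on [(2k-2)/2^(m+1), (2k-1)/2^(m+1)), -2^(m/2) on
  [(2k-1)/2^(m+1), 2k/2^(m+1)), and 0 otherwise. H 0 is unused (set to 0).\<close>

definition haar_level :: "nat \<Rightarrow> nat" where
  "haar_level r = (THE m. 2 ^ m < r \<and> r \<le> 2 ^ (m + 1))"

definition haar :: "nat \<Rightarrow> real \<Rightarrow> real" where
  "haar r s =
    (if r = 0 then 0
     else if r = 1 then 1
     else (let m = haar_level r; k = r - 2 ^ m in
       if (2 * real k - 2) / 2 ^ (m + 1) \<le> s \<and> s < (2 * real k - 1) / 2 ^ (m + 1)
       then 2 powr (real m / 2)
       else if (2 * real k - 1) / 2 ^ (m + 1) \<le> s \<and> s < (2 * real k) / 2 ^ (m + 1)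
       then - (2 powr (real m / 2))
       else 0))"

text \<open>g_{d(r-1)+j} = H_r e_j for r >= 1, 1 <= j <= d, where e_1..e_d is the
  standard basis (given as an enumeration e of the basis).\<close>

definition haar_g :: "nat \<Rightarrow> (nat \<Rightarrow> 'a::real_vector) \<Rightarrow> nat \<Rightarrow> real \<Rightarrow> 'a" where
  "haar_g d e i s = haar ((i - 1) div d + 1) s *\<^sub>R e ((i - 1) mod d + 1)"

text \<open>S_i(s) = integral of g_i over [0,s], for s in [0,1]; paths are normalised
  to 0 outside [0,1] so that elements of C_0([0,1]) are genuine functions.\<close>

definition schauder_S :: "nat \<Rightarrow> (nat \<Rightarrow> 'a::euclidean_space) \<Rightarrow> nat \<Rightarrow> real \<Rightarrow> 'a" where
  "schauder_S d e i s = (if 0 \<le> s \<and> s \<le> 1 then integral {0..s} (haar_g d e i) else 0)"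

definition C0 :: "(real \<Rightarrow> 'a::real_normed_vector) set" where
  "C0 = {\<gamma>. continuous_on {0..1} \<gamma> \<and> \<gamma> 0 = 0 \<and> (\<forall>s. s \<notin> {0..1} \<longrightarrow> \<gamma> s = 0)}"

definition supdist :: "(real \<Rightarrow> 'a::real_normed_vector) \<Rightarrow> (real \<Rightarrow> 'a) \<Rightarrow> real" where
  "supdist \<gamma> \<eta> = (SUP s\<in>{0..1}. norm (\<gamma> s - \<eta> s))"

text \<open>product (max) distance on (C_0)^m, tuples represented as lists of length m\<close>
definition tupledist :: "(real \<Rightarrow> 'a::real_normed_vector) list \<Rightarrow> (real \<Rightarrow> 'a) list \<Rightarrow> real" where
  "tupledist \<Gamma> \<Delta> = Max (insert 0 {supdist (\<Gamma> ! k) (\<Delta> ! k) | k. k < length \<Gamma>})"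

definition C0_tuples :: "nat \<Rightarrow> (real \<Rightarrow> 'a::real_normed_vector) list set" where
  "C0_tuples m = {\<Gamma>. length \<Gamma> = m \<and> set \<Gamma> \<subseteq> C0}"

definition bcont_test :: "nat \<Rightarrow> ((real \<Rightarrow> 'a::real_normed_vector) list \<Rightarrow> real) \<Rightarrow> bool" where
  "bcont_test m F \<longleftrightarrow>
     (\<exists>B. \<forall>\<Gamma>\<in>C0_tuples m. \<bar>F \<Gamma>\<bar> \<le> B) \<and>
     (\<forall>\<Gamma>\<in>C0_tuples m. \<forall>\<epsilon>>0. \<exists>\<delta>>0. \<forall>\<Delta>\<in>C0_tuples m.
         tupledist \<Gamma> \<Delta> < \<delta> \<longrightarrow> \<bar>F \<Delta> - F \<Gamma>\<bar> < \<epsilon>)"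

definition weak_conv_C0_tuples ::
  "'w measure \<Rightarrow> nat \<Rightarrow> (nat \<Rightarrow> 'w \<Rightarrow> (real \<Rightarrow> 'a::real_normed_vector) list) \<Rightarrow> ('w \<Rightarrow> (real \<Rightarrow> 'a) list) \<Rightarrow> bool" where
  "weak_conv_C0_tuples M m Z Z' \<longleftrightarrow>
     (\<forall>F. bcont_test m F \<longrightarrow>
        (\<lambda>n. integral\<^sup>L M (\<lambda>\<omega>. F (Z n \<omega>))) \<longlonglongrightarrow> integral\<^sup>L M (\<lambda>\<omega>. F (Z' \<omega>)))"

definition wiener_process :: "'w measure \<Rightarrow> (real \<Rightarrow> 'w \<Rightarrow> real) \<Rightarrow> bool" where
  "wiener_process M W \<longleftrightarrow>
     (\<forall>t\<ge>0. W t \<in> borel_measurable M) \<and>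
     (\<forall>\<omega>\<in>space M. W 0 \<omega> = 0) \<and>
     (AE \<omega> in M. continuous_on {0..} (\<lambda>t. W t \<omega>)) \<and>
     (\<forall>s t. 0 \<le> s \<longrightarrow> s < t \<longrightarrow>
        distributed M lborel (\<lambda>\<omega>. W t \<omega> - W s \<omega>) (normal_density 0 (sqrt (t - s)))) \<and>
     (\<forall>(ts :: nat \<Rightarrow> real) n. 0 \<le> ts 0 \<longrightarrow> (\<forall>k<n. ts k < ts (Suc k)) \<longrightarrow>
        prob_space.indep_vars M (\<lambda>_. borel) (\<lambda>k \<omega>. W (ts (Suc k)) \<omega> - W (ts k) \<omega>) {..<n})"

text \<open>G solves dG = -G dt + sqrt 2 dW with non-random G(0) = x; since the noise is
  additive, this is the pathwise integral equation
  G(t) = x - int_0^t G(u) du + sqrt 2 W(t).\<close>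
definition ou_process :: "'w measure \<Rightarrow> (real \<Rightarrow> 'w \<Rightarrow> real) \<Rightarrow> real \<Rightarrow> (real \<Rightarrow> 'w \<Rightarrow> real) \<Rightarrow> bool" where
  "ou_process M W x G \<longleftrightarrow>
     (\<forall>t\<ge>0. G t \<in> borel_measurable M) \<and>
     (\<forall>\<omega>\<in>space M. G 0 \<omega> = x) \<and>
     (AE \<omega> in M. continuous_on {0..} (\<lambda>t. G t \<omega>) \<and>
        (\<forall>t\<ge>0. G t \<omega> = x - integral {0..t} (\<lambda>u. G u \<omega>) + sqrt 2 * W t \<omega>))"

definition partial_X ::
  "nat \<Rightarrow> (nat \<Rightarrow> 'a::euclidean_space) \<Rightarrow> (nat \<Rightarrow> real) \<Rightarrow> (nat \<Rightarrow> real \<Rightarrow> 'w \<Rightarrow> real)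
     \<Rightarrow> nat \<Rightarrow> real \<Rightarrow> 'w \<Rightarrow> real \<Rightarrow> 'a" where
  "partial_X d e lam G n t \<omega> = (\<lambda>s. \<Sum>i\<in>{1..n}. G i (lam i * t) \<omega> *\<^sub>R schauder_S d e i s)"

end

theory Submission
  imports Defs
begin

text \<open>
  A level-\<open>m\<close> Schauder function has height \<open>O(2^(-m/2))\<close>, and at any point at most \<open>d\<close>
  of the \<open>d 2^m\<close> functions of level \<open>m\<close> are nonzero. So the series converges uniformly in
  \<open>s\<close> and locally uniformly in \<open>t\<close> as soon as the level-\<open>m\<close> coefficients
  \<open>G_i(\<lambda>_i t)\<close> are bounded by \<open>b_m\<close> with \<open>\<Sum> b_m 2^(-m/2) < \<infinity>\<close>. Such a bound holds
  almost surely: writing the Ornstein--Uhlenbeck equation as \<open>G = x - \<integral>G + \<surd>2 W\<close>,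
  variation of constants gives \<open>|G| \<le> |x| + 2\<surd>2 sup|W|\<close>, and \<open>sup|W|\<close> over
  \<open>[0, \<lambda>_{d2^(m+1)} T]\<close> is controlled by chaining over dyadic increments, whose
  eighth moments feed a Borel--Cantelli argument over the levels. Almost sure convergence
  in \<open>C_0\<close>, uniformly on compact time intervals, yields a continuous modification, and by
  dominated convergence the convergence of all finite-dimensional distributions. The summability hypotheses enter only through
  \<open>\<lambda>_{d2^m} = O(2^(m/2))\<close> and, since \<open>\<lambda>_i \<ge> \<lambda>_1 > 0\<close>, through
  \<open>\<Sum>_m 2^(-m/2) max {|x_i| | d2^m < i \<le> d2^(m+1)} < \<infinity>\<close>.
\<close>

section \<open>Haar and Schauder functions\<close>

lemma two_powr_half_eq: "2 powr (real m / 2) = sqrt 2 ^ m"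
proof -
  have "2 powr (real m / 2) = (2 powr (1/2)) ^ m" by (simp add: powr_power)
  then show ?thesis by (simp add: powr_half_sqrt)
qed

lemma two_powr_neg_half_eq: "2 powr (- real m / 2) = 1 / sqrt 2 ^ m"
  using powr_minus_divide[of 2 "real m / 2"] by (simp add: two_powr_half_eq)

lemma sqrt2_power_square: "sqrt 2 ^ m * sqrt 2 ^ m = (2::real) ^ m"
  by (simp flip: power_mult_distrib)

lemma haar_level_eq:
  assumes "2 ^ m < r" "r \<le> 2 ^ (m + 1)"
  shows "haar_level r = m"
  unfolding haar_level_def
proof (rule the_equality)
  show "2 ^ m < r \<and> r \<le> 2 ^ (m + 1)" using assms by simp
next
  fix m' assume m': "2 ^ m' < r \<and> r \<le> 2 ^ (m' + 1)"
  show "m' = m"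
  proof (rule ccontr)
    assume "m' \<noteq> m"
    then have "m' + 1 \<le> m \<or> m + 1 \<le> m'" by linarith
    then have "(2::nat) ^ (m' + 1) \<le> 2 ^ m \<or> (2::nat) ^ (m + 1) \<le> 2 ^ m'"
      by (metis power_increasing one_le_numeral)
    then show False using m' assms by linarith
  qed
qed

lemma haar_level_exists:
  fixes r :: nat
  assumes "2 \<le> r"
  shows "\<exists>m. 2 ^ m < r \<and> r \<le> 2 ^ (m + 1)"
proof -
  have "r \<le> 2 ^ (r + 1)"
    using less_exp[of r] by (simp add: less_imp_le_nat le_trans[of r "2 ^ r"])
  then have "\<exists>m. r \<le> 2 ^ (m + 1)" ..
  define m where "m = (LEAST m. r \<le> 2 ^ (m + 1))"
  have m: "r \<le> 2 ^ (m + 1)" "\<And>k. r \<le> 2 ^ (k + 1) \<Longrightarrow> m \<le> k"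
    unfolding m_def by (rule LeastI_ex[OF \<open>\<exists>m. r \<le> 2 ^ (m + 1)\<close>], rule Least_le)
  have "2 ^ m < r"
  proof (cases m)
    case 0 then show ?thesis using assms by simp
  next
    case (Suc k)
    then show ?thesis using m(2)[of k] by fastforce
  qed
  with m(1) show ?thesis by blast
qed

text \<open>The primitive of \<open>haar r\<close> vanishing at 0: for \<open>r \<ge> 2\<close> the tent with slopes
  \<open>\<plusminus>2 powr (m/2)\<close> over the support \<open>[a, c]\<close> of \<open>haar r\<close>.\<close>

definition schauder :: "nat \<Rightarrow> real \<Rightarrow> real" where
  "schauder r s = (if r = 1 then s else
     (let m = haar_level r; k = r - 2 ^ m;
          a = (2 * real k - 2) / 2 ^ (m + 1); b = (2 * real k - 1) / 2 ^ (m + 1);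
          c = (2 * real k) / 2 ^ (m + 1); h = 2 powr (real m / 2)
      in h * (min (max s a) b - a) - h * (min (max s b) c - b)))"

lemma haar_dyadic:
  assumes "2 ^ m < r" "r \<le> 2 ^ (m + 1)"
  defines "k \<equiv> r - 2 ^ m"
  defines "a \<equiv> (2 * real k - 2) / 2 ^ (m + 1)" and "b \<equiv> (2 * real k - 1) / 2 ^ (m + 1)"
    and "c \<equiv> (2 * real k) / 2 ^ (m + 1)" and "h \<equiv> sqrt 2 ^ m"
  shows "haar r s = (if a \<le> s \<and> s < b then h else if b \<le> s \<and> s < c then - h else 0)"
    and "schauder r s = h * (min (max s a) b - a) - h * (min (max s b) c - b)"
    and "0 \<le> a" "a < b" "b < c" "b - a = c - b" "b - a = 1 / 2 ^ (m + 1)"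
    and "a = (real k - 1) / 2 ^ m" "c = real k / 2 ^ m"
proof -
  have r: "r \<noteq> 0" "r \<noteq> 1" using assms(1) by (auto simp: le_less_trans[of 1 "2^m" r])
  have lev: "haar_level r = m" by (rule haar_level_eq[OF assms(1,2)])
  show "haar r s = (if a \<le> s \<and> s < b then h else if b \<le> s \<and> s < c then - h else 0)"
    "schauder r s = h * (min (max s a) b - a) - h * (min (max s b) c - b)"
    using r unfolding haar_def schauder_def lev Let_def a_def b_def c_def h_def k_def
    by (simp_all add: two_powr_half_eq)
  have "1 \<le> k" using assms(1) unfolding k_def by auto
  then show "0 \<le> a" unfolding a_def by simp
  show "a < b" "b < c" "b - a = c - b" "b - a = 1 / 2 ^ (m + 1)"
    "a = (real k - 1) / 2 ^ m" "c = real k / 2 ^ m"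
    unfolding a_def b_def c_def by (auto simp: field_simps)
qed

lemma continuous_on_schauder: "continuous_on S (schauder r)"
proof (cases "r = 1")
  case True
  then have "schauder r = (\<lambda>s. s)" by (simp add: schauder_def fun_eq_iff)
  then show ?thesis by simp
next
  case False
  then show ?thesis unfolding schauder_def Let_def by simp (intro continuous_intros)
qed

lemma tent_has_vector_derivative:
  fixes a b c h :: real
  assumes ab: "a < b" "b < c" and y: "y \<notin> {a, b, c}"
  shows "((\<lambda>s. h * (min (max s a) b - a) - h * (min (max s b) c - b)) has_vector_derivative
           (if a \<le> y \<and> y < b then h else if b \<le> y \<and> y < c then - h else 0)) (at y)"
proof -
  define \<Phi> where "\<Phi> = (\<lambda>s. h * (min (max s a) b - a) - h * (min (max s b) c - b))"
  consider "y < a" | "a < y" "y < b" | "b < y" "y < c" | "c < y" using y by force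
  then have "(\<Phi> has_vector_derivative (if a \<le> y \<and> y < b then h else if b \<le> y \<and> y < c then - h else 0)) (at y)"
  proof cases
    case 1
    have "(\<Phi> has_vector_derivative 0) (at y)"
      by (rule has_vector_derivative_transform_within_open[OF has_vector_derivative_const, where S="{..<a}"])
         (use 1 ab in \<open>auto simp: \<Phi>_def\<close>)
    then show ?thesis using 1 ab by simp
  next
    case 2
    have "((\<lambda>z. h * (z - a)) has_vector_derivative h) (at y)"
      by (auto intro!: derivative_eq_intros simp flip: has_real_derivative_iff_has_vector_derivative)
    then have "(\<Phi> has_vector_derivative h) (at y)"
      by (rule has_vector_derivative_transform_within_open[where S="{a<..<b}"])
         (use 2 ab in \<open>auto simp: \<Phi>_def\<close>)
    then show ?thesis using 2 ab by simp
  next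
    case 3
    have "((\<lambda>z. h * (b - a) - h * (z - b)) has_vector_derivative - h) (at y)"
      by (auto intro!: derivative_eq_intros simp flip: has_real_derivative_iff_has_vector_derivative)
    then have "(\<Phi> has_vector_derivative - h) (at y)"
      by (rule has_vector_derivative_transform_within_open[where S="{b<..<c}"])
         (use 3 ab in \<open>auto simp: \<Phi>_def\<close>)
    then show ?thesis using 3 ab by simp
  next
    case 4
    have "(\<Phi> has_vector_derivative 0) (at y)"
      by (rule has_vector_derivative_transform_within_open[OF has_vector_derivative_const, where S="{c<..}"])
         (use 4 ab in \<open>auto simp: \<Phi>_def\<close>)
    then show ?thesis using 4 ab by simp
  qed
  then show ?thesis by (simp add: \<Phi>_def)
qed

lemma haar_has_integral_schauder:
  assumes r: "1 \<le> r" and s: "0 \<le> s"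
  shows "(haar r has_integral schauder r s) {0..s}"
proof (cases "r = 1")
  case True
  then have "haar r = (\<lambda>_. 1)" by (simp add: haar_def fun_eq_iff)
  then show ?thesis using True s has_integral_const_real[of "1::real" 0 s] by (simp add: schauder_def)
next
  case False
  then obtain m where m: "2 ^ m < r" "r \<le> 2 ^ (m + 1)" using r haar_level_exists[of r] by auto
  define k where "k = r - 2 ^ m"
  define a where "a = (2 * real k - 2) / 2 ^ (m + 1)"
  define b where "b = (2 * real k - 1) / 2 ^ (m + 1)"
  define c where "c = (2 * real k) / 2 ^ (m + 1)"
  define h where "h = sqrt 2 ^ m"
  note dy = haar_dyadic[OF m, folded k_def, folded a_def b_def c_def h_def]
  have tent: "schauder r = (\<lambda>s. h * (min (max s a) b - a) - h * (min (max s b) c - b))"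
    using dy(2) by (simp add: fun_eq_iff)
  have "(schauder r has_vector_derivative haar r y) (at y)" if "y \<notin> {a, b, c}" for y
    using tent_has_vector_derivative[OF dy(4,5) that, of h] unfolding tent dy(1) .
  moreover have "continuous_on {0..s} (schauder r)" by (rule continuous_on_schauder)
  ultimately have "(haar r has_integral (schauder r s - schauder r 0)) {0..s}"
    by (intro fundamental_theorem_of_calculus_interior_strong[where S="{a, b, c}"]) (use s in auto)
  moreover have "schauder r 0 = 0" using dy(2-5) by simp
  ultimately show ?thesis by simp
qed

lemma schauder_0: "1 \<le> r \<Longrightarrow> schauder r 0 = 0"
  using haar_has_integral_schauder[of r 0] has_integral_unique[OF _ has_integral_refl(1)] by auto

lemma schauder_dyadic_bound:
  assumes "2 ^ m < r" "r \<le> 2 ^ (m + 1)"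
  shows "\<bar>schauder r s\<bar> \<le> 1 / (2 * sqrt 2 ^ m)"
    and "schauder r s \<noteq> 0 \<Longrightarrow> real (r - 2 ^ m) - 1 < s * 2 ^ m \<and> s * 2 ^ m < real (r - 2 ^ m)"
proof -
  define k where "k = r - 2 ^ m"
  define a where "a = (2 * real k - 2) / 2 ^ (m + 1)"
  define b where "b = (2 * real k - 1) / 2 ^ (m + 1)"
  define c where "c = (2 * real k) / 2 ^ (m + 1)"
  define h where "h = sqrt 2 ^ m"
  note dy = haar_dyadic[OF assms, folded k_def, folded a_def b_def c_def h_def]
  have h: "0 < h" unfolding h_def by simp
  have "0 \<le> min (max s a) b - a" "min (max s a) b - a \<le> b - a"
    "0 \<le> min (max s b) c - b" "min (max s b) c - b \<le> b - a" using dy by auto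
  then have "\<bar>schauder r s\<bar> \<le> h * (b - a)"
    unfolding dy(2) using h by (smt (verit, best) mult_left_mono mult_nonneg_nonneg)
  also have "h * (b - a) = 1 / (2 * sqrt 2 ^ m)"
    unfolding dy(7) h_def sqrt2_power_square[symmetric] by (simp add: field_simps)
  finally show "\<bar>schauder r s\<bar> \<le> 1 / (2 * sqrt 2 ^ m)" .
  assume "schauder r s \<noteq> 0"
  then have "a < s" "s < c" using dy(2)[of s] dy(4-6) by (auto simp: not_less min_def max_def split: if_splits)
  then show "real (r - 2 ^ m) - 1 < s * 2 ^ m \<and> s * 2 ^ m < real (r - 2 ^ m)"
    unfolding dy(8,9) k_def by (simp add: field_simps)
qed

definition level_indices :: "nat \<Rightarrow> nat \<Rightarrow> nat set" where
  "level_indices d m = {d * 2 ^ m <.. d * 2 ^ (m + 1)}"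

definition haar_index :: "nat \<Rightarrow> nat \<Rightarrow> nat" where
  "haar_index d i = (i - 1) div d + 1"

lemma finite_level_indices [simp]: "finite (level_indices d m)"
  by (simp add: level_indices_def)

lemma schauder_S_eq:
  "schauder_S d e i s =
    (if 0 \<le> s \<and> s \<le> 1 then schauder (haar_index d i) s *\<^sub>R e ((i - 1) mod d + 1) else 0)"
proof -
  have "(haar_g d e i has_integral schauder (haar_index d i) s *\<^sub>R e ((i - 1) mod d + 1)) {0..s}"
    if "0 \<le> s"
    unfolding haar_g_def[abs_def] haar_index_def using that
    by (intro has_integral_scaleR_left haar_has_integral_schauder) auto
  then show ?thesis unfolding schauder_S_def using integral_unique by auto
qed

lemma schauder_S_in_C0: "schauder_S d e i \<in> C0"
proof -
  have "continuous_on {0..1} (\<lambda>s. schauder (haar_index d i) s *\<^sub>R e ((i - 1) mod d + 1))"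
    by (intro continuous_intros continuous_on_schauder)
  then have "continuous_on {0..1} (schauder_S d e i)"
    by (rule continuous_on_eq) (auto simp: schauder_S_eq)
  then show ?thesis unfolding C0_def by (auto simp: schauder_S_eq schauder_0 haar_index_def)
qed

lemma haar_index_bounds:
  assumes "1 \<le> d" "i \<in> level_indices d m"
  shows "2 ^ m < haar_index d i" "haar_index d i \<le> 2 ^ (m + 1)"
proof -
  have "d * 2 ^ m \<le> i - 1" "i - 1 < d * 2 ^ (m + 1)" using assms by (auto simp: level_indices_def)
  then have "2 ^ m \<le> (i - 1) div d" "(i - 1) div d < 2 ^ (m + 1)"
    using assms(1) by (auto simp: less_eq_div_iff_mult_less_eq div_less_iff_less_mult mult.commute)
  then show "2 ^ m < haar_index d i" "haar_index d i \<le> 2 ^ (m + 1)"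
    by (auto simp: haar_index_def)
qed

lemma mem_level_indices_haar_level:
  assumes "1 \<le> d" "d < i"
  shows "i \<in> level_indices d (haar_level (haar_index d i))"
proof -
  have "1 \<le> (i - 1) div d" using assms by (simp add: less_eq_div_iff_mult_less_eq)
  then obtain m where m: "2 ^ m < haar_index d i" "haar_index d i \<le> 2 ^ (m + 1)"
    using haar_level_exists[of "haar_index d i"] by (auto simp: haar_index_def)
  then have "2 ^ m \<le> (i - 1) div d" "(i - 1) div d < 2 ^ (m + 1)" by (auto simp: haar_index_def)
  then have "d * 2 ^ m < i" "i \<le> d * 2 ^ (m + 1)"
    using assms by (auto simp: less_eq_div_iff_mult_less_eq div_less_iff_less_mult mult.commute)
  then show ?thesis using haar_level_eq[OF m] by (simp add: level_indices_def)
qed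

lemma card_schauder_support_le:
  assumes d: "1 \<le> d"
  shows "card {i \<in> level_indices d m. schauder (haar_index d i) s \<noteq> 0} \<le> d"
proof -
  define A where "A = {i \<in> level_indices d m. schauder (haar_index d i) s \<noteq> 0}"
  show ?thesis
  proof (cases "A = {}")
    case False
    then obtain i0 where i0: "i0 \<in> A" by blast
    have support: "real (haar_index d i - 2 ^ m) - 1 < s * 2 ^ m \<and> s * 2 ^ m < real (haar_index d i - 2 ^ m)"
      if "i \<in> A" for i
      using that schauder_dyadic_bound(2)[OF haar_index_bounds[OF d]] by (auto simp: A_def)
    \<comment> \<open>the dyadic intervals of one level are disjoint\<close>
    have same_index: "haar_index d i = haar_index d i0" if "i \<in> A" for i
    proof -
      have "real (haar_index d i - 2 ^ m) < real (haar_index d i0 - 2 ^ m) + 1"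
        "real (haar_index d i0 - 2 ^ m) < real (haar_index d i - 2 ^ m) + 1"
        using support[OF that] support[OF i0] by linarith+
      then have "haar_index d i - 2 ^ m = haar_index d i0 - 2 ^ m" by linarith
      moreover have "2 ^ m < haar_index d i" "2 ^ m < haar_index d i0"
        using haar_index_bounds(1)[OF d] that i0 by (auto simp: A_def)
      ultimately show ?thesis by linarith
    qed
    have "A \<subseteq> {d * (haar_index d i0 - 1) + 1 .. d * (haar_index d i0 - 1) + d}"
    proof
      fix i assume i: "i \<in> A"
      then have "1 \<le> i" "(i - 1) div d = haar_index d i0 - 1"
        using same_index[OF i] by (auto simp: A_def level_indices_def haar_index_def)
      moreover have "i - 1 = d * ((i - 1) div d) + (i - 1) mod d" "(i - 1) mod d < d" using d by simp_all
      ultimately show "i \<in> {d * (haar_index d i0 - 1) + 1 .. d * (haar_index d i0 - 1) + d}" by auto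
    qed
    from card_mono[OF _ this] show ?thesis by (simp add: A_def)
  qed (simp add: A_def[symmetric])
qed

lemma norm_schauder_S_le_abs_schauder:
  assumes d: "1 \<le> d" and e: "\<And>j. j \<in> {1..d} \<Longrightarrow> norm (e j) \<le> 1"
  shows "norm (schauder_S d e i s) \<le> \<bar>schauder (haar_index d i) s\<bar>"
proof -
  have "norm (e ((i - 1) mod d + 1)) \<le> 1" using d by (intro e) (simp add: Suc_le_eq)
  then show ?thesis by (simp add: schauder_S_eq mult_left_le)
qed

lemma norm_schauder_S_le_1:
  assumes d: "1 \<le> d" and e: "\<And>j. j \<in> {1..d} \<Longrightarrow> norm (e j) \<le> 1"
  shows "norm (schauder_S d e i s) \<le> 1"
proof (cases "0 \<le> s \<and> s \<le> 1")
  case True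
  have "\<bar>schauder (haar_index d i) s\<bar> \<le> 1"
  proof (cases "haar_index d i = 1")
    case True
    then show ?thesis using \<open>0 \<le> s \<and> s \<le> 1\<close> by (simp add: schauder_def)
  next
    case False
    then obtain m where m: "2 ^ m < haar_index d i" "haar_index d i \<le> 2 ^ (m + 1)"
      using haar_level_exists[of "haar_index d i"] by (auto simp: haar_index_def)
    have "1 \<le> sqrt 2 ^ m" by (rule one_le_power) simp
    then have "1 / (2 * sqrt 2 ^ m) \<le> (1::real)" by (simp add: field_simps) (use \<open>1 \<le> sqrt 2 ^ m\<close> in linarith)
    with schauder_dyadic_bound(1)[OF m, of s] show ?thesis by linarith
  qed
  then show ?thesis using norm_schauder_S_le_abs_schauder[of d e i s, OF d e] by linarith
qed (auto simp: schauder_S_eq)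

lemma norm_sum_schauder_S_level_le:
  fixes e :: "nat \<Rightarrow> 'a::euclidean_space"
  assumes d: "1 \<le> d" and e: "\<And>j. j \<in> {1..d} \<Longrightarrow> norm (e j) \<le> 1"
    and A: "A \<subseteq> level_indices d m" and c: "\<And>i. i \<in> A \<Longrightarrow> \<bar>c i\<bar> \<le> B" and B: "0 \<le> B"
  shows "norm (\<Sum>i\<in>A. c i *\<^sub>R schauder_S d e i s) \<le> real d * B / (2 * sqrt 2 ^ m)"
proof -
  define \<beta> :: real where "\<beta> = 1 / (2 * sqrt 2 ^ m)"
  define P where "P = {i \<in> level_indices d m. schauder (haar_index d i) s \<noteq> 0}"
  have "norm (c i *\<^sub>R schauder_S d e i s) \<le> (if i \<in> P then B * \<beta> else 0)" if i: "i \<in> A" for i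
  proof -
    have "\<bar>schauder (haar_index d i) s\<bar> \<le> \<beta>"
      unfolding \<beta>_def using haar_index_bounds[OF d] A i by (blast intro: schauder_dyadic_bound(1))
    then have "norm (schauder_S d e i s) \<le> (if i \<in> P then \<beta> else 0)"
      using norm_schauder_S_le_abs_schauder[of d e i s, OF d e] A i by (auto simp: P_def)
    then show ?thesis using c[OF i] B by (auto intro: mult_mono)
  qed
  then have "norm (\<Sum>i\<in>A. c i *\<^sub>R schauder_S d e i s) \<le> (\<Sum>i\<in>A. if i \<in> P then B * \<beta> else 0)"
    by (intro order_trans[OF norm_sum sum_mono])
  also have "\<dots> = real (card (A \<inter> P)) * (B * \<beta>)"
    using finite_subset[OF A] by (simp add: sum.If_cases)
  also have "\<dots> \<le> real d * (B * \<beta>)"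
    using card_schauder_support_le[OF d, of m s] card_mono[of P "A \<inter> P"] B
    by (intro mult_right_mono) (auto simp: P_def \<beta>_def)
  finally show ?thesis by (simp add: \<beta>_def)
qed

lemma sum_le_suminf_shift:
  fixes f :: "nat \<Rightarrow> real"
  assumes "summable (\<lambda>k. f (k + j))" "finite F" "\<And>m. m \<in> F \<Longrightarrow> j \<le> m" "\<And>m. j \<le> m \<Longrightarrow> 0 \<le> f m"
  shows "sum f F \<le> (\<Sum>k. f (k + j))"
proof -
  have "inj_on (\<lambda>m. m - j) F" using assms(3) by (intro inj_onI) (metis le_add_diff_inverse2)
  then have "sum f F = (\<Sum>k\<in>(\<lambda>m. m - j) ` F. f (k + j))"
    using assms(3) by (simp add: sum.reindex)
  also have "\<dots> \<le> (\<Sum>k. f (k + j))"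
    using assms by (intro sum_le_suminf) auto
  finally show ?thesis .
qed

lemma norm_schauder_tail_le:
  fixes e :: "nat \<Rightarrow> 'a::euclidean_space"
  assumes d: "1 \<le> d" and e: "\<And>j. j \<in> {1..d} \<Longrightarrow> norm (e j) \<le> 1"
    and c: "\<And>m i. j \<le> m \<Longrightarrow> i \<in> level_indices d m \<Longrightarrow> \<bar>c i\<bar> \<le> b m"
    and b: "\<And>m. 0 \<le> b m" and sb: "summable (\<lambda>m. b m / sqrt 2 ^ m)"
    and n: "d * 2 ^ j \<le> n"
  shows "norm (\<Sum>i\<in>{n<..n'}. c i *\<^sub>R schauder_S d e i s) \<le> real d / 2 * (\<Sum>k. b (k + j) / sqrt 2 ^ (k + j))"
proof -
  define S where "S = {n<..n'}"
  define lv where "lv i = haar_level (haar_index d i)" for i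
  have "d \<le> n" using n d by (metis le_trans mult.right_neutral mult_le_mono2 one_le_numeral one_le_power)
  then have lv: "i \<in> level_indices d (lv i)" if "i \<in> S" for i
    using mem_level_indices_haar_level[OF d] that unfolding lv_def S_def by simp
  have lv_ge: "j \<le> lv i" if "i \<in> S" for i
  proof -
    have "d * 2 ^ j < i" "i \<le> d * 2 ^ (lv i + 1)"
      using lv[OF that] n that by (auto simp: S_def level_indices_def)
    then have "d * 2 ^ j < d * 2 ^ (lv i + 1)" by linarith
    then have "(2::nat) ^ j < 2 ^ (lv i + 1)" by (meson mult_less_cancel1)
    then show ?thesis by (simp del: power_Suc)
  qed
  have "norm (\<Sum>i\<in>S. c i *\<^sub>R schauder_S d e i s)
      = norm (\<Sum>m\<in>lv ` S. \<Sum>i\<in>{i \<in> S. lv i = m}. c i *\<^sub>R schauder_S d e i s)"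
    by (subst sum.image_gen) (simp_all add: S_def)
  also have "\<dots> \<le> (\<Sum>m\<in>lv ` S. real d / 2 * (b m / sqrt 2 ^ m))"
  proof (intro order_trans[OF norm_sum sum_mono])
    fix m assume "m \<in> lv ` S"
    then have "norm (\<Sum>i\<in>{i \<in> S. lv i = m}. c i *\<^sub>R schauder_S d e i s) \<le> real d * b m / (2 * sqrt 2 ^ m)"
      using lv lv_ge by (intro norm_sum_schauder_S_level_le[OF d e] c b) force+
    then show "norm (\<Sum>i\<in>{i \<in> S. lv i = m}. c i *\<^sub>R schauder_S d e i s) \<le> real d / 2 * (b m / sqrt 2 ^ m)"
      by simp
  qed
  also have "\<dots> \<le> real d / 2 * (\<Sum>k. b (k + j) / sqrt 2 ^ (k + j))"
    unfolding sum_distrib_left[symmetric] using lv_ge b summable_ignore_initial_segment[OF sb, of j]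
    by (intro mult_left_mono sum_le_suminf_shift) (auto simp: S_def)
  finally show ?thesis by (simp add: S_def)
qed

lemma uniformly_Cauchy_on_schauder_series:
  fixes e :: "nat \<Rightarrow> 'a::euclidean_space"
  assumes d: "1 \<le> d" and e: "\<And>j. j \<in> {1..d} \<Longrightarrow> norm (e j) \<le> 1"
    and bound: "\<exists>m0. \<forall>m\<ge>m0. \<forall>i\<in>level_indices d m. \<forall>t\<in>T. \<bar>g i t\<bar> \<le> b m"
    and b: "\<And>m. 0 \<le> b m" and sb: "summable (\<lambda>m. b m / sqrt 2 ^ m)"
  shows "uniformly_Cauchy_on (T \<times> UNIV) (\<lambda>n (t, s). \<Sum>i\<in>{1..n}. g i t *\<^sub>R schauder_S d e i s)"
proof (rule uniformly_Cauchy_onI')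
  fix \<epsilon> :: real assume "0 < \<epsilon>"
  define \<tau> where "\<tau> j = real d / 2 * (\<Sum>k. b (k + j) / sqrt 2 ^ (k + j))" for j
  have "\<tau> \<longlonglongrightarrow> real d / 2 * 0"
    unfolding \<tau>_def by (intro tendsto_mult_left suminf_exist_split2 sb)
  from order_tendstoD(2)[OF this] \<open>0 < \<epsilon>\<close> obtain j0 where j0: "\<And>j. j0 \<le> j \<Longrightarrow> \<tau> j < \<epsilon>"
    by (auto simp: eventually_sequentially)
  obtain m0 where m0: "\<And>m i t. m0 \<le> m \<Longrightarrow> i \<in> level_indices d m \<Longrightarrow> t \<in> T \<Longrightarrow> \<bar>g i t\<bar> \<le> b m"
    using bound by blast
  define j where "j = max j0 m0"
  show "\<exists>M. \<forall>x\<in>T \<times> UNIV. \<forall>m\<ge>M. \<forall>n>m. dist ((\<lambda>(t, s). \<Sum>i\<in>{1..m}. g i t *\<^sub>R schauder_S d e i s) x)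
           ((\<lambda>(t, s). \<Sum>i\<in>{1..n}. g i t *\<^sub>R schauder_S d e i s) x) < \<epsilon>"
  proof (intro exI[of _ "d * 2 ^ j"] ballI allI impI, clarify)
    fix t s m n assume t: "t \<in> T" and m: "d * 2 ^ j \<le> m" and "m < n"
    then have "{1..n} = {1..m} \<union> {m<..n}" "{1..m} \<inter> {m<..n} = {}" by auto
    then have "dist (\<Sum>i\<in>{1..m}. g i t *\<^sub>R schauder_S d e i s) (\<Sum>i\<in>{1..n}. g i t *\<^sub>R schauder_S d e i s)
        = norm (\<Sum>i\<in>{m<..n}. g i t *\<^sub>R schauder_S d e i s)"
      by (simp add: sum.union_disjoint dist_commute dist_norm)
    moreover have "norm (\<Sum>i\<in>{m<..n}. g i t *\<^sub>R schauder_S d e i s) \<le> \<tau> j"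
      unfolding \<tau>_def using m0 t by (intro norm_schauder_tail_le[OF d e _ b sb m]) (auto simp: j_def)
    ultimately show "dist (\<Sum>i\<in>{1..m}. g i t *\<^sub>R schauder_S d e i s) (\<Sum>i\<in>{1..n}. g i t *\<^sub>R schauder_S d e i s) < \<epsilon>"
      using j0[of j] by (simp add: j_def)
  qed
qed

section \<open>Chaining and the Ornstein--Uhlenbeck equation\<close>

lemma dyadic_chaining_bound:
  fixes f :: "real \<Rightarrow> real"
  assumes f0: "f 0 = 0" and A: "0 \<le> A" and q: "0 \<le> q"
    and inc: "\<And>n k. k < (2::nat) ^ n \<Longrightarrow> \<bar>f ((real k + 1) * L / 2 ^ n) - f (real k * L / 2 ^ n)\<bar> \<le> A * q ^ n"
  shows "j \<le> (2::nat) ^ N \<Longrightarrow> \<bar>f (real j * L / 2 ^ N)\<bar> \<le> A * (\<Sum>n\<le>N. q ^ n)"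
proof (induction N arbitrary: j)
  case 0
  then consider "j = 0" | "j = 1" by force
  then show ?case
  proof cases
    case 1 then show ?thesis using f0 A by simp
  next
    case 2 then show ?thesis using inc[of 0 0] f0 by simp
  qed
next
  case (Suc N)
  have S0: "0 \<le> A * q ^ Suc N" using A q by simp
  obtain j' where j': "j = 2 * j' \<or> j = 2 * j' + 1" by (metis oddE evenE)
  then show ?case
  proof
    assume jj: "j = 2 * j'"
    then have "j' \<le> 2 ^ N" using Suc.prems by simp
    then have "\<bar>f (real j' * L / 2 ^ N)\<bar> \<le> A * (\<Sum>n\<le>N. q ^ n)" by (rule Suc.IH)
    moreover have "real j * L / 2 ^ Suc N = real j' * L / 2 ^ N" using jj by simp
    ultimately show ?thesis using S0 by (simp add: distrib_left)
  next
    assume jj: "j = 2 * j' + 1"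
    then have "j' < 2 ^ N" using Suc.prems by simp
    then have "j' \<le> 2 ^ N" by simp
    then have IH: "\<bar>f (real j' * L / 2 ^ N)\<bar> \<le> A * (\<Sum>n\<le>N. q ^ n)" by (rule Suc.IH)
    have k: "2 * j' < 2 ^ Suc N" using \<open>j' < 2 ^ N\<close> by simp
    have I: "\<bar>f ((real (2 * j') + 1) * L / 2 ^ Suc N) - f (real (2 * j') * L / 2 ^ Suc N)\<bar> \<le> A * q ^ Suc N"
      by (rule inc[OF k])
    have e1: "real (2 * j') * L / 2 ^ Suc N = real j' * L / 2 ^ N" by simp
    have e2: "(real (2 * j') + 1) * L / 2 ^ Suc N = real j * L / 2 ^ Suc N" using jj by simp
    show ?thesis using IH I unfolding e1 e2 by (simp add: distrib_left)
  qed
qed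

lemma dyadic_floor_approx:
  assumes L: "0 < L" and u: "u \<in> {0..L}"
  shows "nat \<lfloor>u * 2 ^ N / L\<rfloor> \<le> 2 ^ N"
    and "(\<lambda>N. real (nat \<lfloor>u * 2 ^ N / L\<rfloor>) * L / 2 ^ N) \<longlonglongrightarrow> u"
proof -
  have "u * 2 ^ N / L \<le> 2 ^ N" for N using u L by (simp add: field_simps)
  then show "nat \<lfloor>u * 2 ^ N / L\<rfloor> \<le> 2 ^ N"
    by (metis floor_mono floor_of_nat nat_le_iff of_nat_numeral of_nat_power)
  define v where "v N = real (nat \<lfloor>u * 2 ^ N / L\<rfloor>) * L / 2 ^ N" for N
  have "u - L / 2 ^ N \<le> v N \<and> v N \<le> u" for N
  proof -
    define w where "w = u * 2 ^ N / L"
    have v: "v N = of_int \<lfloor>w\<rfloor> * L / 2 ^ N" using u L by (simp add: v_def w_def)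
    have "of_int \<lfloor>w\<rfloor> * L / 2 ^ N \<le> w * L / 2 ^ N"
      using L by (intro divide_right_mono mult_right_mono) auto
    moreover have "(w - 1) * L / 2 ^ N \<le> of_int \<lfloor>w\<rfloor> * L / 2 ^ N"
      using L by (intro divide_right_mono mult_right_mono) (linarith, auto)
    moreover have "w * L / 2 ^ N = u" "(w - 1) * L / 2 ^ N = u - L / 2 ^ N"
      using L by (simp_all add: w_def field_simps)
    ultimately show ?thesis unfolding v by simp
  qed
  moreover have "(\<lambda>N. u - L / 2 ^ N) \<longlonglongrightarrow> u - 0"
    by (intro tendsto_intros LIMSEQ_divide_realpow_zero) simp
  ultimately show "v \<longlonglongrightarrow> u"
    by (intro real_tendsto_sandwich[of "\<lambda>N. u - L / 2 ^ N" v sequentially "\<lambda>N. u"]) auto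
qed

lemma chaining_bound:
  fixes f :: "real \<Rightarrow> real"
  assumes f0: "f 0 = 0" and A: "0 \<le> A" and q: "0 \<le> q" "q < 1" and L: "0 \<le> L"
    and cont: "continuous_on {0..L} f"
    and inc: "\<And>n k. k < (2::nat) ^ n \<Longrightarrow> \<bar>f ((real k + 1) * L / 2 ^ n) - f (real k * L / 2 ^ n)\<bar> \<le> A * q ^ n"
    and u: "u \<in> {0..L}"
  shows "\<bar>f u\<bar> \<le> A / (1 - q)"
proof (cases "L = 0")
  case True
  then show ?thesis using u f0 A q by simp
next
  case False
  then have L: "0 < L" using L by simp
  have dyadic: "\<bar>f (real j * L / 2 ^ N)\<bar> \<le> A / (1 - q)" if "j \<le> 2 ^ N" for j N
  proof -
    have "\<bar>f (real j * L / 2 ^ N)\<bar> \<le> A * (\<Sum>n\<le>N. q ^ n)"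
      by (rule dyadic_chaining_bound[OF f0 A q(1) inc that])
    also have "\<dots> \<le> A * (\<Sum>n. q ^ n)"
      using q by (intro mult_left_mono[OF sum_le_suminf] A) auto
    also have "\<dots> = A / (1 - q)" using q by (simp add: suminf_geometric)
    finally show ?thesis .
  qed
  have "(\<lambda>N. f (real (nat \<lfloor>u * 2 ^ N / L\<rfloor>) * L / 2 ^ N)) \<longlonglongrightarrow> f u"
    using dyadic_floor_approx(1)[OF L u] L
    by (intro continuous_on_tendsto_compose[OF cont dyadic_floor_approx(2)[OF L u] u])
       (auto simp: field_simps)
  then show ?thesis
    by (rule LIMSEQ_le_const2[OF tendsto_rabs]) (use dyadic dyadic_floor_approx(1)[OF L u] in auto)
qed

lemma ou_variation_of_constants:
  fixes G W :: "real \<Rightarrow> real"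
  assumes cG: "continuous_on {0..L} G" and cW: "continuous_on {0..L} W"
    and eq: "\<And>t. t \<in> {0..L} \<Longrightarrow> G t = x - integral {0..t} G + \<sigma> * W t"
    and t: "t \<in> {0..L}"
  shows "exp t * (x - integral {0..t} G) = x - \<sigma> * integral {0..t} (\<lambda>u. exp u * W u)"
proof -
  define \<Phi> where "\<Phi> = (\<lambda>t. exp t * (x - integral {0..t} G) + \<sigma> * integral {0..t} (\<lambda>u. exp u * W u))"
  have cEW: "continuous_on {0..L} (\<lambda>u. exp u * W u)" by (intro continuous_intros cW)
  have "(\<Phi> has_real_derivative 0) (at s within {0..L})" if s: "s \<in> {0..L}" for s
  proof -
    have "(\<Phi> has_real_derivative
        exp s * (0 - G s) + exp s * (x - integral {0..s} G) + \<sigma> * (exp s * W s)) (at s within {0..L})"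
      unfolding \<Phi>_def
      by (intro DERIV_add DERIV_mult' DERIV_cmult DERIV_diff DERIV_const
          integral_has_real_derivative[OF cG s] integral_has_real_derivative[OF cEW s]
          has_field_derivative_at_within[OF DERIV_exp])
    moreover have "exp s * (0 - G s) + exp s * (x - integral {0..s} G) + \<sigma> * (exp s * W s)
        = exp s * (x - integral {0..s} G - G s + \<sigma> * W s)"
      by (simp add: algebra_simps)
    ultimately have "(\<Phi> has_real_derivative exp s * (x - integral {0..s} G - G s + \<sigma> * W s)) (at s within {0..L})"
      by simp
    then show ?thesis using eq[OF s] by simp
  qed
  then obtain c where "\<And>s. s \<in> {0..L} \<Longrightarrow> \<Phi> s = c"
    using has_field_derivative_zero_constant[of "{0..L}" \<Phi>] by auto
  then have "\<Phi> t = \<Phi> 0" using t by fastforce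
  then show ?thesis by (simp add: \<Phi>_def algebra_simps)
qed

lemma ou_path_bound:
  fixes G W :: "real \<Rightarrow> real"
  assumes cG: "continuous_on {0..L} G" and cW: "continuous_on {0..L} W"
    and eq: "\<And>t. t \<in> {0..L} \<Longrightarrow> G t = x - integral {0..t} G + \<sigma> * W t"
    and \<sigma>: "0 \<le> \<sigma>" and Wb: "\<And>u. u \<in> {0..L} \<Longrightarrow> \<bar>W u\<bar> \<le> A"
    and t: "t \<in> {0..L}"
  shows "\<bar>G t\<bar> \<le> \<bar>x\<bar> + 2 * \<sigma> * A"
proof -
  have A: "0 \<le> A" using Wb[OF t] by simp
  have "(exp has_integral (exp t - exp 0)) {0..t}"
    using t by (intro fundamental_theorem_of_calculus)
      (auto intro!: derivative_eq_intros simp flip: has_real_derivative_iff_has_vector_derivative)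
  from has_integral_mult_left[OF this, of A]
  have exp_integral: "((\<lambda>u. exp u * A) has_integral (exp t - 1) * A) {0..t}" by simp
  have "\<bar>integral {0..t} (\<lambda>u. exp u * W u)\<bar> \<le> integral {0..t} (\<lambda>u. exp u * A)"
  proof (rule Henstock_Kurzweil_Integration.integral_norm_bound_integral[where 'a=real, unfolded real_norm_def])
    have "continuous_on {0..t} (\<lambda>u. exp u * W u)"
      using t by (intro continuous_intros continuous_on_subset[OF cW]) auto
    then show "(\<lambda>u. exp u * W u) integrable_on {0..t}" by (rule integrable_continuous_real)
    show "(\<lambda>u. exp u * A) integrable_on {0..t}" using exp_integral by blast
    show "\<bar>exp u * W u\<bar> \<le> exp u * A" if "u \<in> {0..t}" for u
      using Wb[of u] that t by (simp add: abs_mult)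
  qed
  also have "\<dots> = (exp t - 1) * A" using exp_integral by (rule integral_unique)
  finally have I: "\<bar>integral {0..t} (\<lambda>u. exp u * W u)\<bar> \<le> (exp t - 1) * A" .
  have "exp t * \<bar>x - integral {0..t} G\<bar> = \<bar>x - \<sigma> * integral {0..t} (\<lambda>u. exp u * W u)\<bar>"
    using ou_variation_of_constants[OF cG cW eq t] by (metis abs_exp_cancel abs_mult)
  also have "\<dots> \<le> \<bar>x\<bar> + \<sigma> * ((exp t - 1) * A)"
    using I \<sigma> by (simp add: abs_mult order.trans[OF abs_triangle_ineq4] mult_left_mono)
  also have "\<dots> \<le> exp t * (\<bar>x\<bar> + \<sigma> * A)"
  proof -
    have "\<bar>x\<bar> * 1 \<le> \<bar>x\<bar> * exp t" using t by (intro mult_left_mono) auto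
    moreover have "0 \<le> A * \<sigma>" using \<sigma> A by simp
    ultimately show ?thesis by (simp add: algebra_simps)
  qed
  finally have "\<bar>x - integral {0..t} G\<bar> \<le> \<bar>x\<bar> + \<sigma> * A" by simp
  moreover have "\<bar>\<sigma> * W t\<bar> \<le> \<sigma> * A" using Wb[OF t] \<sigma> by (simp add: abs_mult mult_left_mono)
  ultimately show ?thesis using eq[OF t] by linarith
qed

section \<open>Dyadic increments of Wiener processes\<close>

lemma normal_moment_8:
  assumes "0 < \<sigma>"
  shows "has_bochner_integral lborel (\<lambda>x. normal_density 0 \<sigma> x * x ^ 8) (105 * \<sigma> ^ 8)"
proof -
  have "has_bochner_integral lborel (\<lambda>x. normal_density 0 \<sigma> x * (x - 0) ^ (2 * 4)) (fact (2 * 4) / ((2 / \<sigma>\<^sup>2)^4 * fact 4))"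
    by (rule normal_moment_even[OF assms])
  moreover have "fact (2 * 4) / ((2 / \<sigma>\<^sup>2)^4 * fact 4) = (105 * \<sigma> ^ 8 :: real)"
    using assms by (simp add: fact_numeral field_simps flip: power_mult)
  ultimately show ?thesis by simp
qed

lemma wiener_increment_moment_8:
  assumes W: "wiener_process M W" and st: "0 \<le> s" "s < t"
  shows "integrable M (\<lambda>\<omega>. (W t \<omega> - W s \<omega>) ^ 8)"
    and "(\<integral>\<omega>. (W t \<omega> - W s \<omega>) ^ 8 \<partial>M) = 105 * (t - s) ^ 4"
proof -
  have D: "distributed M lborel (\<lambda>\<omega>. W t \<omega> - W s \<omega>) (normal_density 0 (sqrt (t - s)))"
    using W st unfolding wiener_process_def by auto
  have N: "has_bochner_integral lborel (\<lambda>x. normal_density 0 (sqrt (t - s)) x * x ^ 8) (105 * sqrt (t - s) ^ 8)"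
    using st by (intro normal_moment_8) simp
  then show "integrable M (\<lambda>\<omega>. (W t \<omega> - W s \<omega>) ^ 8)"
    using distributed_integrable[OF D, of "\<lambda>x. x ^ 8"] by (auto simp: has_bochner_integral_iff)
  have "sqrt (t - s) ^ 8 = (sqrt (t - s) ^ 2) ^ 4" by (simp flip: power_mult)
  then show "(\<integral>\<omega>. (W t \<omega> - W s \<omega>) ^ 8 \<partial>M) = 105 * (t - s) ^ 4"
    using distributed_integral[OF D, of "\<lambda>x. x ^ 8"] N st by (simp add: has_bochner_integral_iff)
qed

lemma wiener_increment_tail:
  assumes P: "prob_space M" and W: "wiener_process M W" and st: "0 \<le> s" "s \<le> t" and y: "0 < y"
  shows "measure M {\<omega>\<in>space M. y < \<bar>W t \<omega> - W s \<omega>\<bar>} \<le> 105 * (t - s) ^ 4 / y ^ 8"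
proof (cases "s = t")
  case False
  interpret prob_space M by (rule P)
  have st': "s < t" using st False by simp
  have [measurable]: "W t \<in> borel_measurable M" "W s \<in> borel_measurable M"
    using W st unfolding wiener_process_def by auto
  have "{\<omega>\<in>space M. y < \<bar>W t \<omega> - W s \<omega>\<bar>} \<subseteq> {\<omega>\<in>space M. y ^ 8 \<le> (W t \<omega> - W s \<omega>) ^ 8}"
    using y by (auto intro: power_mono[where n=8, of y "\<bar>_\<bar>", simplified])
  then have "measure M {\<omega>\<in>space M. y < \<bar>W t \<omega> - W s \<omega>\<bar>} \<le> measure M {\<omega>\<in>space M. y ^ 8 \<le> (W t \<omega> - W s \<omega>) ^ 8}"
    by (intro finite_measure_mono) measurable
  also have "\<dots> \<le> (\<integral>\<omega>. (W t \<omega> - W s \<omega>) ^ 8 \<partial>M) / y ^ 8"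
    using y by (intro integral_Markov_inequality_measure[OF wiener_increment_moment_8(1)[OF W st(1) st']]) auto
  finally show ?thesis using wiener_increment_moment_8(2)[OF W st(1) st'] by simp
qed (use y in simp)

text \<open>By the eighth moment, each of the \<open>2^n\<close> dyadic increments of level \<open>n\<close> exceeds
  \<open>A * chain_ratio ^ n\<close> with probability \<open>O(16^-n / chain_ratio^(8n)) = O(4^-n)\<close>, so the whole
  level contributes \<open>O(2^-n)\<close>.\<close>

definition chain_ratio :: real where
  "chain_ratio = root 8 (1/4)"

lemma chain_ratio: "0 < chain_ratio" "chain_ratio < 1" "chain_ratio ^ 8 = 1/4"
  unfolding chain_ratio_def by auto

definition large_dyadic_increments ::
  "'w measure \<Rightarrow> (nat \<Rightarrow> real \<Rightarrow> 'w \<Rightarrow> real) \<Rightarrow> nat set \<Rightarrow> real \<Rightarrow> real \<Rightarrow> 'w set" where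
  "large_dyadic_increments M W I L A = (\<Union>i\<in>I. \<Union>n. \<Union>k\<in>{..<(2::nat) ^ n}.
     {\<omega>\<in>space M. A * chain_ratio ^ n < \<bar>W i ((real k + 1) * L / 2 ^ n) \<omega> - W i (real k * L / 2 ^ n) \<omega>\<bar>})"

lemma large_dyadic_increment_in_sets:
  assumes "wiener_process M (W i)" "0 \<le> L"
  shows "{\<omega>\<in>space M. A * chain_ratio ^ n < \<bar>W i ((real k + 1) * L / 2 ^ n) \<omega> - W i (real k * L / 2 ^ n) \<omega>\<bar>} \<in> sets M"
proof -
  have [measurable]: "W i ((real k + 1) * L / 2 ^ n) \<in> borel_measurable M" "W i (real k * L / 2 ^ n) \<in> borel_measurable M"
    using assms unfolding wiener_process_def by auto
  show ?thesis by measurable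
qed

lemma large_dyadic_increments_in_sets:
  assumes W: "\<And>i. i \<in> I \<Longrightarrow> wiener_process M (W i)" and L: "0 \<le> L" and I: "countable I"
  shows "large_dyadic_increments M W I L A \<in> sets M"
  unfolding large_dyadic_increments_def
  by (intro sets.countable_UN' I ballI sets.countable_UN sets.finite_UN)
     (auto intro: large_dyadic_increment_in_sets W L)

lemma measure_large_dyadic_increment_le:
  assumes P: "prob_space M" and W: "wiener_process M W" and L: "0 \<le> L" and A: "0 < A"
  shows "measure M {\<omega>\<in>space M. A * chain_ratio ^ n < \<bar>W ((real k + 1) * L / 2 ^ n) \<omega> - W (real k * L / 2 ^ n) \<omega>\<bar>}
           \<le> 105 * L ^ 4 / A ^ 8 * (1/4) ^ n"
proof -
  have "measure M {\<omega>\<in>space M. A * chain_ratio ^ n < \<bar>W ((real k + 1) * L / 2 ^ n) \<omega> - W (real k * L / 2 ^ n) \<omega>\<bar>}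
      \<le> 105 * ((real k + 1) * L / 2 ^ n - real k * L / 2 ^ n) ^ 4 / (A * chain_ratio ^ n) ^ 8"
    using A L chain_ratio(1) by (intro wiener_increment_tail[OF P W]) (auto simp: field_simps)
  also have "(real k + 1) * L / 2 ^ n - real k * L / 2 ^ n = L / 2 ^ n"
    by (simp add: field_simps)
  also have "105 * (L / 2 ^ n) ^ 4 / (A * chain_ratio ^ n) ^ 8 = 105 * L ^ 4 / A ^ 8 * (1/4) ^ n"
  proof -
    have "(chain_ratio ^ n) ^ 8 = (1/4) ^ n" using chain_ratio(3) by (metis mult.commute power_mult)
    moreover have "((2::real) ^ n) ^ 4 = (2 ^ 4) ^ n" by (metis mult.commute power_mult)
    then have "((2::real) ^ n) ^ 4 = 4 ^ n * 4 ^ n" by (simp flip: power_mult_distrib)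
    ultimately show ?thesis using A by (simp add: field_simps)
  qed
  finally show ?thesis .
qed

lemma measure_large_dyadic_increments_le:
  assumes P: "prob_space M" and W: "\<And>i. i \<in> I \<Longrightarrow> wiener_process M (W i)"
    and L: "0 \<le> L" and A: "0 < A" and I: "finite I"
  shows "measure M (large_dyadic_increments M W I L A) \<le> real (card I) * (210 * L ^ 4 / A ^ 8)"
proof -
  interpret prob_space M by (rule P)
  define c where "c = 105 * L ^ 4 / A ^ 8"
  define S where "S i n k = {\<omega>\<in>space M. A * chain_ratio ^ n <
      \<bar>W i ((real k + 1) * L / 2 ^ n) \<omega> - W i (real k * L / 2 ^ n) \<omega>\<bar>}" for i n and k :: nat
  have S_sets: "S i n k \<in> sets M" if "i \<in> I" for i n k
    unfolding S_def using W[OF that] L by (rule large_dyadic_increment_in_sets)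
  have S_le: "measure M (S i n k) \<le> c * (1/4) ^ n" if "i \<in> I" for i n k
    unfolding S_def c_def by (rule measure_large_dyadic_increment_le[OF P W[OF that] L A])
  have level_le: "measure M (\<Union>k<(2::nat) ^ n. S i n k) \<le> c * (1/2) ^ n" if "i \<in> I" for i n
  proof -
    have "measure M (\<Union>k<(2::nat) ^ n. S i n k) \<le> (\<Sum>k<(2::nat) ^ n. c * (1/4) ^ n)"
      using S_sets[OF that] S_le[OF that] by (intro order_trans[OF finite_measure_subadditive_finite sum_mono]) auto
    also have "\<dots> = c * (2 ^ n * (1/4) ^ n)" by simp
    also have "2 ^ n * (1/4) ^ n = ((1/2)::real) ^ n" by (simp flip: power_mult_distrib)
    finally show ?thesis .
  qed
  have geometric: "summable (\<lambda>n. c * (1/2::real) ^ n)" "(\<Sum>n. c * (1/2::real) ^ n) = 2 * c"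
    by (auto intro!: summable_mult summable_geometric simp: suminf_mult suminf_geometric)
  have index_le: "measure M (\<Union>n. \<Union>k<(2::nat) ^ n. S i n k) \<le> 2 * c" if "i \<in> I" for i
  proof -
    have summable: "summable (\<lambda>n. measure M (\<Union>k<(2::nat) ^ n. S i n k))"
      using level_le[OF that] by (intro summable_comparison_test[OF _ geometric(1)]) auto
    then have "measure M (\<Union>n. \<Union>k<(2::nat) ^ n. S i n k) \<le> (\<Sum>n. measure M (\<Union>k<(2::nat) ^ n. S i n k))"
      using S_sets[OF that] by (intro finite_measure_subadditive_countably) auto
    also have "\<dots> \<le> (\<Sum>n. c * (1/2) ^ n)"
      using level_le[OF that] summable geometric(1) by (intro suminf_le) auto
    finally show ?thesis using geometric(2) by simp
  qed
  have "measure M (large_dyadic_increments M W I L A) \<le> (\<Sum>i\<in>I. measure M (\<Union>n. \<Union>k<(2::nat) ^ n. S i n k))"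
    unfolding large_dyadic_increments_def S_def[symmetric] using S_sets
    by (intro finite_measure_subadditive_finite I) auto
  also have "\<dots> \<le> real (card I) * (210 * L ^ 4 / A ^ 8)"
    using sum_mono[of I _ "\<lambda>_. 2 * c", OF index_le] by (simp add: c_def)
  finally show ?thesis .
qed

lemma level_increment_bound_eq:
  fixes \<gamma> K :: real
  assumes "0 < \<gamma>"
  shows "real (d * 2 ^ m) * (210 * (K * sqrt 2 ^ m) ^ 4 / ((sqrt 2 * \<gamma>) ^ m) ^ 8)
    = 210 * real d * K ^ 4 * (1 / (2 * \<gamma> ^ 8)) ^ m"
proof -
  have "(sqrt 2 ^ m) ^ 4 = ((sqrt 2) ^ 4) ^ m" "((sqrt 2 * \<gamma>) ^ m) ^ 8 = ((sqrt 2 * \<gamma>) ^ 8) ^ m"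
    by (metis mult.commute power_mult)+
  moreover have "(sqrt 2::real) ^ 4 = 4" "(sqrt 2::real) ^ 8 = 16"
    using power_mult[of "sqrt 2::real" 2 2] power_mult[of "sqrt 2::real" 2 4] by simp_all
  ultimately have "real (d * 2 ^ m) * (210 * (K * sqrt 2 ^ m) ^ 4 / ((sqrt 2 * \<gamma>) ^ m) ^ 8)
      = 210 * real d * K ^ 4 * ((2 ^ m * 4 ^ m) / (16 * \<gamma> ^ 8) ^ m)"
    by (simp add: power_mult_distrib)
  also have "(2 ^ m * 4 ^ m) / (16 * \<gamma> ^ 8) ^ m = ((2 * 4) / (16 * \<gamma> ^ 8)) ^ m"
    by (simp only: power_divide power_mult_distrib)
  also have "(2 * 4) / (16 * \<gamma> ^ 8) = 1 / (2 * \<gamma> ^ 8)"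
    using assms by simp
  finally show ?thesis .
qed

lemma AE_eventually_level_increments_le:
  fixes W :: "nat \<Rightarrow> real \<Rightarrow> 'w \<Rightarrow> real"
  assumes P: "prob_space M" and W: "\<And>i. 1 \<le> i \<Longrightarrow> wiener_process M (W i)" and d: "1 \<le> d"
    and L: "\<And>m. 0 \<le> L m" "\<And>m. L m \<le> K * sqrt 2 ^ m" and \<gamma>: "0 < \<gamma>" "1/2 < \<gamma> ^ 8"
  shows "AE \<omega> in M. eventually (\<lambda>m. \<forall>i\<in>level_indices d m. \<forall>n. \<forall>k<(2::nat) ^ n.
      \<bar>W i ((real k + 1) * L m / 2 ^ n) \<omega> - W i (real k * L m / 2 ^ n) \<omega>\<bar> \<le> (sqrt 2 * \<gamma>) ^ m * chain_ratio ^ n)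
    sequentially"
proof -
  interpret prob_space M by (rule P)
  define E where "E m = large_dyadic_increments M W (level_indices d m) (L m) ((sqrt 2 * \<gamma>) ^ m)" for m
  define \<rho> where "\<rho> = 1 / (2 * \<gamma> ^ 8)"
  have \<rho>: "0 < \<rho>" "\<rho> < 1" using \<gamma> by (auto simp: \<rho>_def)
  have K: "0 \<le> K" using L(1,2)[of 0] by simp
  have level_W: "wiener_process M (W i)" if "i \<in> level_indices d m" for i m
    using that by (intro W) (auto simp: level_indices_def)
  have E_sets: "E m \<in> sets M" for m
    unfolding E_def using L(1) level_W by (intro large_dyadic_increments_in_sets) auto
  have "measure M (E m) \<le> 210 * real d * K ^ 4 * \<rho> ^ m" for m
  proof -
    have "card (level_indices d m) = d * 2 ^ m" by (simp add: level_indices_def)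
    moreover have "measure M (E m)
        \<le> real (card (level_indices d m)) * (210 * L m ^ 4 / ((sqrt 2 * \<gamma>) ^ m) ^ 8)"
      unfolding E_def by (rule measure_large_dyadic_increments_le[OF P level_W L(1)]) (use \<gamma> in auto)
    ultimately have "measure M (E m) \<le> real (d * 2 ^ m) * (210 * L m ^ 4 / ((sqrt 2 * \<gamma>) ^ m) ^ 8)"
      by simp
    also have "\<dots> \<le> real (d * 2 ^ m) * (210 * (K * sqrt 2 ^ m) ^ 4 / ((sqrt 2 * \<gamma>) ^ m) ^ 8)"
      using L \<gamma> by (intro mult_left_mono divide_right_mono power_mono) auto
    also have "\<dots> = 210 * real d * K ^ 4 * \<rho> ^ m"
      unfolding \<rho>_def using \<gamma>(1) by (rule level_increment_bound_eq)
    finally show ?thesis .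
  qed
  then have "summable (\<lambda>m. measure M (E m))"
    using \<rho> by (intro summable_comparison_test[OF _ summable_mult[OF summable_geometric[of \<rho>]]]) auto
  then have "AE \<omega> in M. eventually (\<lambda>m. \<omega> \<in> space M - E m) sequentially"
    using E_sets by (intro borel_cantelli_AE1) (auto simp: emeasure_eq_measure)
  then show ?thesis
    by (rule AE_mp, intro AE_I2 impI, elim eventually_mono)
       (auto simp: E_def large_dyadic_increments_def not_less)
qed

section \<open>Uniform limits and test functionals on \<open>(C_0)^m\<close>\<close>

lemma uniform_limit_section:
  assumes "uniform_limit (A \<times> B) (\<lambda>n (t, s). f n t s) (\<lambda>(t, s). g t s) F" "t \<in> A"
  shows "uniform_limit B (\<lambda>n. f n t) (g t) F"
  using assms unfolding uniform_limit_iff by (fastforce elim: eventually_mono)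

lemma uniform_limit_at_within_of_uniform_limit:
  fixes f :: "nat \<Rightarrow> 'a::topological_space \<Rightarrow> 'b \<Rightarrow> 'c::metric_space"
  assumes lim: "uniform_limit (A \<times> B) (\<lambda>n (t, s). f n t s) (\<lambda>(t, s). g t s) sequentially"
    and cont: "\<And>n. uniform_limit B (f n) (f n t0) (at t0 within A)" and t0: "t0 \<in> A"
  shows "uniform_limit B g (g t0) (at t0 within A)"
proof (rule uniform_limitI)
  fix \<epsilon> :: real assume "0 < \<epsilon>"
  then obtain n where n: "\<forall>(t, s)\<in>A \<times> B. dist (f n t s) (g t s) < \<epsilon> / 3"
    using uniform_limitD[OF lim, of "\<epsilon> / 3"] by (auto simp: eventually_sequentially)
  have "\<forall>\<^sub>F t in at t0 within A. t \<in> A \<and> (\<forall>s\<in>B. dist (f n t s) (f n t0 s) < \<epsilon> / 3)"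
    using uniform_limitD[OF cont, of "\<epsilon> / 3"] \<open>0 < \<epsilon>\<close> by (auto simp: eventually_at_filter elim: eventually_mono)
  then show "\<forall>\<^sub>F t in at t0 within A. \<forall>s\<in>B. dist (g t s) (g t0 s) < \<epsilon>"
  proof (rule eventually_mono, safe)
    fix t s assume "t \<in> A" "s \<in> B" and "\<forall>s\<in>B. dist (f n t s) (f n t0 s) < \<epsilon> / 3"
    then have "dist (g t s) (f n t s) < \<epsilon> / 3" "dist (f n t s) (f n t0 s) < \<epsilon> / 3"
      "dist (f n t0 s) (g t0 s) < \<epsilon> / 3"
      using n t0 by (auto simp: dist_commute)
    then show "dist (g t s) (g t0 s) < \<epsilon>"
      using dist_triangle[of "g t s" "g t0 s" "f n t s"] dist_triangle[of "f n t s" "g t0 s" "f n t0 s"]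
      by linarith
  qed
qed

lemma uniform_limit_sum_scaleR:
  fixes f :: "'i \<Rightarrow> 'b \<Rightarrow> 'c::real_normed_vector"
  assumes "finite I" "\<And>i. i \<in> I \<Longrightarrow> (c i \<longlongrightarrow> l i) F" "\<And>i. i \<in> I \<Longrightarrow> bounded (f i ` B)"
  shows "uniform_limit B (\<lambda>t s. \<Sum>i\<in>I. c i t *\<^sub>R f i s) (\<lambda>s. \<Sum>i\<in>I. l i *\<^sub>R f i s) F"
  using assms
proof (induction I rule: finite_induct)
  case (insert j I)
  have "uniform_limit B (\<lambda>t s. c j t) (\<lambda>s. l j) F"
    using insert.prems(1)[of j] by (auto simp: uniform_limit_iff elim: tendstoD)
  then have "uniform_limit B (\<lambda>t s. c j t *\<^sub>R f j s) (\<lambda>s. l j *\<^sub>R f j s) F"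
    using insert.prems(2)[of j]
    by (intro bounded_bilinear.bounded_uniform_limit[OF bounded_bilinear_scaleR] uniform_limit_const)
       (auto simp: image_constant_conv)
  with insert show ?case by (simp add: uniform_limit_add)
qed (simp add: uniform_limit_const)

lemma sum_scaleR_in_C0:
  "finite I \<Longrightarrow> (\<And>i. i \<in> I \<Longrightarrow> f i \<in> C0) \<Longrightarrow> (\<lambda>s. \<Sum>i\<in>I. c i *\<^sub>R f i s) \<in> C0"
  unfolding C0_def by (auto intro!: continuous_on_sum continuous_on_scaleR continuous_on_const)

lemma tupledist_nonneg: "0 \<le> tupledist \<Gamma> \<Delta>"
  unfolding tupledist_def by (rule Max_ge) auto

lemma tupledist_le:
  assumes "\<And>k s. k < length \<Gamma> \<Longrightarrow> s \<in> {0..1} \<Longrightarrow> norm ((\<Gamma> ! k) s - (\<Delta> ! k) s) \<le> c" "0 \<le> c"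
  shows "tupledist \<Gamma> \<Delta> \<le> c"
proof -
  have "supdist (\<Gamma> ! k) (\<Delta> ! k) \<le> c" if "k < length \<Gamma>" for k
    unfolding supdist_def by (rule cSUP_least) (use assms that in auto)
  then show ?thesis unfolding tupledist_def using assms(2) by auto
qed

lemma bcont_test_tendsto:
  assumes F: "bcont_test m F" and \<Gamma>: "\<Gamma> \<in> C0_tuples m" and \<Delta>: "\<And>n. \<Delta> n \<in> C0_tuples m"
    and lim: "(\<lambda>n. tupledist \<Gamma> (\<Delta> n)) \<longlonglongrightarrow> 0"
  shows "(\<lambda>n. F (\<Delta> n)) \<longlonglongrightarrow> F \<Gamma>"
proof (rule LIMSEQ_I)
  fix r :: real assume "0 < r"
  then obtain \<delta> where "0 < \<delta>" and \<delta>: "\<And>\<Delta>'. \<Delta>' \<in> C0_tuples m \<Longrightarrow> tupledist \<Gamma> \<Delta>' < \<delta> \<Longrightarrow> \<bar>F \<Delta>' - F \<Gamma>\<bar> < r"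
    using F \<Gamma> unfolding bcont_test_def by blast
  obtain N where "\<And>n. N \<le> n \<Longrightarrow> norm (tupledist \<Gamma> (\<Delta> n) - 0) < \<delta>"
    using LIMSEQ_D[OF lim \<open>0 < \<delta>\<close>] by blast
  then show "\<exists>N. \<forall>n\<ge>N. norm (F (\<Delta> n) - F \<Gamma>) < r"
    using \<delta>[OF \<Delta>] tupledist_nonneg by (metis abs_of_nonneg diff_zero real_norm_def)
qed

lemma measurable_bcont_test_comp:
  fixes \<Phi> :: "('i::countable \<Rightarrow> real) \<Rightarrow> (real \<Rightarrow> 'a::real_normed_vector) list"
  assumes F: "bcont_test m F" and \<Phi>: "\<And>v. \<Phi> v \<in> C0_tuples m"
    and \<Phi>_cont: "\<And>u v. (\<And>j. (\<lambda>k. u k j) \<longlonglongrightarrow> v j) \<Longrightarrow> (\<lambda>k. tupledist (\<Phi> v) (\<Phi> (u k))) \<longlonglongrightarrow> 0"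
    and V: "\<And>j. (\<lambda>\<omega>. V \<omega> j) \<in> borel_measurable M"
  shows "(\<lambda>\<omega>. F (\<Phi> (V \<omega>))) \<in> borel_measurable M"
proof -
  have "continuous_on UNIV (\<lambda>v. F (\<Phi> v))"
  proof (rule continuous_on_sequentiallyI)
    fix u :: "nat \<Rightarrow> 'i \<Rightarrow> real" and v assume "u \<longlonglongrightarrow> v"
    then have "(\<lambda>k. u k j) \<longlonglongrightarrow> v j" for j
      by (rule continuous_on_tendsto_compose[OF continuous_on_product_coordinates]) auto
    then show "(\<lambda>k. F (\<Phi> (u k))) \<longlonglongrightarrow> F (\<Phi> v)"
      by (intro bcont_test_tendsto[OF F \<Phi> \<Phi> \<Phi>_cont])
  qed
  then have "(\<lambda>v. F (\<Phi> v)) \<in> borel_measurable borel" by (rule borel_measurable_continuous_onI)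
  moreover have "V \<in> borel_measurable M" by (rule measurable_coordinatewise_then_product) (rule V)
  ultimately show ?thesis by (simp add: measurable_compose[of V])
qed

lemma tupledist_sum_scaleR_le:
  assumes "finite I" "\<And>i s. norm (f i s) \<le> 1"
  shows "tupledist (map (\<lambda>p s. \<Sum>i\<in>I. v (i, p) *\<^sub>R f i s) [0..<m]) (map (\<lambda>p s. \<Sum>i\<in>I. u (i, p) *\<^sub>R f i s) [0..<m])
    \<le> (\<Sum>p<m. \<Sum>i\<in>I. \<bar>v (i, p) - u (i, p)\<bar>)"
proof (rule tupledist_le)
  fix p s assume "p < length (map (\<lambda>p s. \<Sum>i\<in>I. v (i, p) *\<^sub>R f i s) [0..<m])"
  then have p: "p < m" by simp
  have "norm ((\<Sum>i\<in>I. v (i, p) *\<^sub>R f i s) - (\<Sum>i\<in>I. u (i, p) *\<^sub>R f i s))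
      = norm (\<Sum>i\<in>I. (v (i, p) - u (i, p)) *\<^sub>R f i s)"
    by (simp add: scaleR_diff_left sum_subtractf)
  also have "\<dots> \<le> (\<Sum>i\<in>I. \<bar>v (i, p) - u (i, p)\<bar>)"
    using assms(2) by (intro order_trans[OF norm_sum sum_mono]) (simp add: mult_left_le)
  also have "\<dots> \<le> (\<Sum>p<m. \<Sum>i\<in>I. \<bar>v (i, p) - u (i, p)\<bar>)"
    using p by (intro member_le_sum[where f="\<lambda>p. \<Sum>i\<in>I. \<bar>v (i, p) - u (i, p)\<bar>"]) auto
  finally show "norm ((map (\<lambda>p s. \<Sum>i\<in>I. v (i, p) *\<^sub>R f i s) [0..<m] ! p) s
      - (map (\<lambda>p s. \<Sum>i\<in>I. u (i, p) *\<^sub>R f i s) [0..<m] ! p) s) \<le> (\<Sum>p<m. \<Sum>i\<in>I. \<bar>v (i, p) - u (i, p)\<bar>)"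
    using p by simp
qed (auto intro!: sum_nonneg)

text \<open>No \<open>\<sigma>\<close>-algebra on \<open>(C_0)^m\<close> is fixed, so measurability of the test functionals
  along \<open>Z\<close> and \<open>Z'\<close> has to be assumed.\<close>

lemma weak_conv_C0_tuples_of_AE_tendsto:
  fixes Z :: "nat \<Rightarrow> 'w \<Rightarrow> (real \<Rightarrow> 'a::real_normed_vector) list"
  assumes "prob_space M"
    and Z: "\<And>n \<omega>. Z n \<omega> \<in> C0_tuples m" and Z': "\<And>\<omega>. Z' \<omega> \<in> C0_tuples m"
    and meas: "\<And>F n. bcont_test m F \<Longrightarrow> (\<lambda>\<omega>. F (Z n \<omega>)) \<in> borel_measurable M"
    and meas': "\<And>F. bcont_test m F \<Longrightarrow> (\<lambda>\<omega>. F (Z' \<omega>)) \<in> borel_measurable M"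
    and lim: "AE \<omega> in M. (\<lambda>n. tupledist (Z' \<omega>) (Z n \<omega>)) \<longlonglongrightarrow> 0"
  shows "weak_conv_C0_tuples M m Z Z'"
  unfolding weak_conv_C0_tuples_def
proof (intro allI impI)
  interpret prob_space M by fact
  fix F :: "(real \<Rightarrow> 'a) list \<Rightarrow> real" assume F: "bcont_test m F"
  then obtain B where B: "\<And>\<Gamma>. \<Gamma> \<in> C0_tuples m \<Longrightarrow> \<bar>F \<Gamma>\<bar> \<le> B" unfolding bcont_test_def by blast
  show "(\<lambda>n. integral\<^sup>L M (\<lambda>\<omega>. F (Z n \<omega>))) \<longlonglongrightarrow> integral\<^sup>L M (\<lambda>\<omega>. F (Z' \<omega>))"
  proof (rule integral_dominated_convergence[where w="\<lambda>_. B"])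
    show "AE \<omega> in M. (\<lambda>n. F (Z n \<omega>)) \<longlonglongrightarrow> F (Z' \<omega>)"
      using lim by (elim AE_mp) (auto intro: bcont_test_tendsto[OF F Z' Z])
  qed (use meas[OF F] meas'[OF F] B[OF Z] in auto)
qed

section \<open>The Schauder series of the Ornstein--Uhlenbeck family\<close>

locale schauder_ou_series = prob_space M
  for M :: "'w measure" +
  fixes d :: nat and e :: "nat \<Rightarrow> 'a::euclidean_space" and lam :: "nat \<Rightarrow> real"
    and W G :: "nat \<Rightarrow> real \<Rightarrow> 'w \<Rightarrow> real" and x :: "nat \<Rightarrow> real"
  assumes d_pos: "1 \<le> d" and norm_e: "\<And>j. j \<in> {1..d} \<Longrightarrow> norm (e j) \<le> 1"
    and lam_pos: "0 < lam 1"
    and lam_mono: "\<And>i j. 1 \<le> i \<Longrightarrow> i \<le> j \<Longrightarrow> lam i \<le> lam j"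
    and wiener: "\<And>i. 1 \<le> i \<Longrightarrow> wiener_process M (W i)"
    and ou: "\<And>i. 1 \<le> i \<Longrightarrow> ou_process M (W i) (x i) (G i)"
    and summable_lam: "summable (\<lambda>m. 2 powr (- real m / 2) * lam (d * 2 ^ m) * sqrt (real m))"
    and summable_x: "summable (\<lambda>m. 2 powr (- real m / 2) * (MAX i\<in>level_indices d m. \<bar>x i\<bar>) * lam (d * 2 ^ m))"
begin

lemma lam_gt_0: "1 \<le> i \<Longrightarrow> 0 < lam i"
  using lam_mono[of 1 i] lam_pos by simp

lemma level_indices_ge_1: "i \<in> level_indices d m \<Longrightarrow> 1 \<le> i"
  by (auto simp: level_indices_def)

lemma lam_level_growth: "\<exists>K. \<forall>m. lam (d * 2 ^ (m + 1)) \<le> K * sqrt 2 ^ m"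
proof -
  obtain B where B: "\<And>m. \<bar>2 powr (- real m / 2) * lam (d * 2 ^ m) * sqrt (real m)\<bar> \<le> B"
    using convergent_imp_bounded[OF summable_LIMSEQ_zero[OF summable_lam]] by (auto simp: bounded_iff)
  have "lam (d * 2 ^ (m + 1)) \<le> B * sqrt 2 * sqrt 2 ^ m" for m
  proof -
    have "0 < lam (d * 2 ^ (m + 1))" using d_pos by (intro lam_gt_0) simp
    then have "lam (d * 2 ^ (m + 1)) \<le> lam (d * 2 ^ (m + 1)) * sqrt (real (m + 1))" by simp
    also have "\<dots> = (2 powr (- real (m + 1) / 2) * lam (d * 2 ^ (m + 1)) * sqrt (real (m + 1))) * sqrt 2 ^ (m + 1)"
      unfolding two_powr_neg_half_eq by simp
    also have "\<dots> \<le> B * sqrt 2 ^ (m + 1)"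
      using B[of "m + 1"] by (intro mult_right_mono) auto
    finally show ?thesis by (simp add: mult_ac)
  qed
  then show ?thesis by blast
qed

definition x_max :: "nat \<Rightarrow> real" where
  "x_max m = (MAX i\<in>level_indices d m. \<bar>x i\<bar>)"

lemma abs_x_le_x_max: "i \<in> level_indices d m \<Longrightarrow> \<bar>x i\<bar> \<le> x_max m"
  unfolding x_max_def by (rule Max_ge) auto

lemma x_max_nonneg: "0 \<le> x_max m"
  using abs_x_le_x_max[of "d * 2 ^ (m + 1)" m] d_pos by (force simp: level_indices_def)

lemma summable_x_max: "summable (\<lambda>m. x_max m / sqrt 2 ^ m)"
proof (rule summable_comparison_test[OF _ summable_mult[OF summable_x, of "1 / lam 1"]])
  have "x_max m / sqrt 2 ^ m \<le> 1 / lam 1 * (x_max m / sqrt 2 ^ m * lam (d * 2 ^ m))" for m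
  proof -
    have "lam 1 \<le> lam (d * 2 ^ m)" using d_pos by (intro lam_mono) auto
    then have "x_max m * lam 1 \<le> x_max m * lam (d * 2 ^ m)" by (rule mult_left_mono[OF _ x_max_nonneg])
    then show ?thesis using lam_pos by (simp add: field_simps)
  qed
  then show "\<exists>N. \<forall>m\<ge>N. norm (x_max m / sqrt 2 ^ m)
      \<le> 1 / lam 1 * (2 powr (- real m / 2) * (MAX i\<in>level_indices d m. \<bar>x i\<bar>) * lam (d * 2 ^ m))"
    unfolding two_powr_neg_half_eq x_max_def[symmetric] using x_max_nonneg by auto
qed

text \<open>The factor \<open>19/20\<close> satisfies \<open>(19/20)^8 > 1/2\<close>, as Borel--Cantelli needs, while
  \<open>(19/20)^m\<close> stays summable once the level-\<open>m\<close> Schauder functions contribute \<open>sqrt 2 ^ -m\<close>.\<close>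

definition wiener_level_bound :: "nat \<Rightarrow> real" where
  "wiener_level_bound m = (sqrt 2 * (19/20)) ^ m / (1 - chain_ratio)"

definition ou_level_bound :: "nat \<Rightarrow> real" where
  "ou_level_bound m = x_max m + 2 * sqrt 2 * wiener_level_bound m"

lemma ou_level_bound_nonneg: "0 \<le> ou_level_bound m"
  using x_max_nonneg chain_ratio by (simp add: ou_level_bound_def wiener_level_bound_def)

lemma summable_ou_level_bound: "summable (\<lambda>m. ou_level_bound m / sqrt 2 ^ m)"
proof -
  have "wiener_level_bound m / sqrt 2 ^ m = (19/20) ^ m / (1 - chain_ratio)" for m
    unfolding wiener_level_bound_def power_mult_distrib by simp
  then have "summable (\<lambda>m. wiener_level_bound m / sqrt 2 ^ m)"
    by (simp add: summable_divide summable_geometric)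
  then have "summable (\<lambda>m. x_max m / sqrt 2 ^ m + 2 * sqrt 2 * (wiener_level_bound m / sqrt 2 ^ m))"
    by (intro summable_add summable_mult summable_x_max)
  then show ?thesis by (simp add: ou_level_bound_def add_divide_distrib)
qed

definition regular :: "'w \<Rightarrow> bool" where
  "regular \<omega> \<longleftrightarrow> \<omega> \<in> space M \<and>
    (\<forall>T::nat. eventually (\<lambda>m. \<forall>i\<in>level_indices d m. \<forall>n. \<forall>k<(2::nat) ^ n.
       \<bar>W i ((real k + 1) * (lam (d * 2 ^ (m + 1)) * T) / 2 ^ n) \<omega> - W i (real k * (lam (d * 2 ^ (m + 1)) * T) / 2 ^ n) \<omega>\<bar>
         \<le> (sqrt 2 * (19/20)) ^ m * chain_ratio ^ n) sequentially) \<and>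
    (\<forall>i\<ge>1. continuous_on {0..} (\<lambda>t. W i t \<omega>) \<and> continuous_on {0..} (\<lambda>t. G i t \<omega>) \<and>
       (\<forall>t\<ge>0. G i t \<omega> = x i - integral {0..t} (\<lambda>u. G i u \<omega>) + sqrt 2 * W i t \<omega>))"

lemma AE_regular: "AE \<omega> in M. regular \<omega>"
proof -
  define increments where "increments T \<omega> \<longleftrightarrow> eventually (\<lambda>m. \<forall>i\<in>level_indices d m. \<forall>n. \<forall>k<(2::nat) ^ n.
       \<bar>W i ((real k + 1) * (lam (d * 2 ^ (m + 1)) * T) / 2 ^ n) \<omega> - W i (real k * (lam (d * 2 ^ (m + 1)) * T) / 2 ^ n) \<omega>\<bar>
         \<le> (sqrt 2 * (19/20)) ^ m * chain_ratio ^ n) sequentially" for T :: nat and \<omega>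
  define path where "path i \<omega> \<longleftrightarrow> continuous_on {0..} (\<lambda>t. W i t \<omega>) \<and> continuous_on {0..} (\<lambda>t. G i t \<omega>) \<and>
       (\<forall>t\<ge>0. G i t \<omega> = x i - integral {0..t} (\<lambda>u. G i u \<omega>) + sqrt 2 * W i t \<omega>)" for i \<omega>
  obtain K where K: "\<And>m. lam (d * 2 ^ (m + 1)) \<le> K * sqrt 2 ^ m" using lam_level_growth by blast
  have "AE \<omega> in M. increments T \<omega>" for T
    unfolding increments_def
  proof (rule AE_eventually_level_increments_le[OF prob_space_axioms wiener d_pos])
    show "0 \<le> lam (d * 2 ^ (m + 1)) * real T" for m using d_pos lam_gt_0[of "d * 2 ^ (m + 1)"] by simp
    show "lam (d * 2 ^ (m + 1)) * real T \<le> K * real T * sqrt 2 ^ m" for m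
      using mult_right_mono[OF K[of m], of "real T"] by (simp add: mult_ac)
  qed (simp_all add: power_divide)
  moreover have "AE \<omega> in M. 1 \<le> i \<longrightarrow> path i \<omega>" for i
  proof (cases "1 \<le> i")
    case True
    from wiener[OF True] ou[OF True]
    have "AE \<omega> in M. continuous_on {0..} (\<lambda>t. W i t \<omega>)"
      "AE \<omega> in M. continuous_on {0..} (\<lambda>t. G i t \<omega>) \<and>
         (\<forall>t\<ge>0. G i t \<omega> = x i - integral {0..t} (\<lambda>u. G i u \<omega>) + sqrt 2 * W i t \<omega>)"
      unfolding wiener_process_def ou_process_def by blast+
    then show ?thesis unfolding path_def by eventually_elim simp
  qed simp
  ultimately have "AE \<omega> in M. (\<forall>T. increments T \<omega>) \<and> (\<forall>i\<ge>1. path i \<omega>)"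
    unfolding AE_conj_iff AE_all_countable by blast
  with AE_space show ?thesis
    unfolding regular_def increments_def path_def by eventually_elim blast
qed

lemma regular_ou_bound:
  assumes "regular \<omega>"
  shows "\<exists>m0. \<forall>m\<ge>m0. \<forall>i\<in>level_indices d m. \<forall>t\<in>{0..real T}. \<bar>G i (lam i * t) \<omega>\<bar> \<le> ou_level_bound m"
proof -
  obtain m0 where m0: "\<And>m i n k. m0 \<le> m \<Longrightarrow> i \<in> level_indices d m \<Longrightarrow> k < (2::nat) ^ n \<Longrightarrow>
      \<bar>W i ((real k + 1) * (lam (d * 2 ^ (m + 1)) * T) / 2 ^ n) \<omega> - W i (real k * (lam (d * 2 ^ (m + 1)) * T) / 2 ^ n) \<omega>\<bar>
        \<le> (sqrt 2 * (19/20)) ^ m * chain_ratio ^ n"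
    using assms unfolding regular_def eventually_sequentially by meson
  have "\<bar>G i (lam i * t) \<omega>\<bar> \<le> ou_level_bound m"
    if m: "m0 \<le> m" and i: "i \<in> level_indices d m" and t: "t \<in> {0..real T}" for m i t
  proof -
    define L where "L = lam (d * 2 ^ (m + 1)) * T"
    have i1: "1 \<le> i" using i by (rule level_indices_ge_1)
    have W: "continuous_on {0..} (\<lambda>u. W i u \<omega>)" and G: "continuous_on {0..} (\<lambda>u. G i u \<omega>)"
      and eq: "\<And>u. 0 \<le> u \<Longrightarrow> G i u \<omega> = x i - integral {0..u} (\<lambda>v. G i v \<omega>) + sqrt 2 * W i u \<omega>"
      using assms i1 unfolding regular_def by auto
    have "lam i \<le> lam (d * 2 ^ (m + 1))" using i i1 by (intro lam_mono) (auto simp: level_indices_def)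
    then have "lam i * T \<le> L" unfolding L_def by (intro mult_right_mono) auto
    have W_bound: "\<bar>W i u \<omega>\<bar> \<le> wiener_level_bound m" if "u \<in> {0..L}" for u
      unfolding wiener_level_bound_def
    proof (rule chaining_bound[where f="\<lambda>u. W i u \<omega>"])
      show "W i 0 \<omega> = 0" using wiener[OF i1] assms unfolding wiener_process_def regular_def by auto
      show "continuous_on {0..L} (\<lambda>u. W i u \<omega>)" by (rule continuous_on_subset[OF W]) auto
    qed (use m0[OF m i] that chain_ratio d_pos lam_gt_0 in \<open>auto simp: L_def\<close>)
    have "\<bar>G i (lam i * t) \<omega>\<bar> \<le> \<bar>x i\<bar> + 2 * sqrt 2 * wiener_level_bound m"
    proof (rule ou_path_bound[where G="\<lambda>u. G i u \<omega>" and W="\<lambda>u. W i u \<omega>" and L="lam i * T"])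
      show "continuous_on {0..lam i * T} (\<lambda>u. G i u \<omega>)" "continuous_on {0..lam i * T} (\<lambda>u. W i u \<omega>)"
        by (auto intro: continuous_on_subset[OF G] continuous_on_subset[OF W])
      show "lam i * t \<in> {0..lam i * T}" using t lam_gt_0[OF i1] by (auto intro: mult_left_mono)
    qed (use eq W_bound \<open>lam i * T \<le> L\<close> in auto)
    then show ?thesis using abs_x_le_x_max[OF i] by (simp add: ou_level_bound_def)
  qed
  then show ?thesis by blast
qed

lemma regular_uniform_limit:
  assumes "regular \<omega>"
  shows "uniform_limit ({0..real T} \<times> UNIV) (\<lambda>n (t, s). partial_X d e lam G n t \<omega> s)
           (\<lambda>(t, s). lim (\<lambda>n. partial_X d e lam G n t \<omega> s)) sequentially"
proof -
  have "uniformly_Cauchy_on ({0..real T} \<times> UNIV)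
      (\<lambda>n (t, s). \<Sum>i\<in>{1..n}. G i (lam i * t) \<omega> *\<^sub>R schauder_S d e i s)"
    using regular_ou_bound[OF assms] ou_level_bound_nonneg summable_ou_level_bound
    by (intro uniformly_Cauchy_on_schauder_series[OF d_pos norm_e]) auto
  from Cauchy_uniformly_convergent[OF this] show ?thesis
    unfolding uniformly_convergent_uniform_limit_iff partial_X_def by (simp add: case_prod_beta')
qed

lemma obtain_regular_event:
  obtains R where "R \<in> sets M" "AE \<omega> in M. \<omega> \<in> R" "\<And>\<omega>. \<omega> \<in> R \<Longrightarrow> regular \<omega>"
proof -
  obtain N where N: "{\<omega> \<in> space M. \<not> regular \<omega>} \<subseteq> N" "N \<in> null_sets M"
    using AE_regular by (auto elim!: AE_E)
  show ?thesis
  proof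
    show "space M - N \<in> sets M" using N(2) by auto
    show "AE \<omega> in M. \<omega> \<in> space M - N" using N(2) by (auto intro: AE_I')
    show "regular \<omega>" if "\<omega> \<in> space M - N" for \<omega> using that N(1) by auto
  qed
qed

lemma norm_schauder_S_le: "norm (schauder_S d e i s) \<le> 1"
  by (rule norm_schauder_S_le_1) (use d_pos norm_e in auto)

lemma partial_X_in_C0: "partial_X d e lam G n t \<omega> \<in> C0"
  unfolding partial_X_def by (intro sum_scaleR_in_C0 schauder_S_in_C0) simp

lemma measurable_partial_X:
  assumes "0 \<le> t"
  shows "(\<lambda>\<omega>. partial_X d e lam G n t \<omega> s) \<in> borel_measurable M"
proof -
  have "(\<lambda>\<omega>. G i (lam i * t) \<omega>) \<in> borel_measurable M" if "i \<in> {1..n}" for i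
    using ou[of i] lam_gt_0[of i] that assms by (auto simp: ou_process_def)
  then show ?thesis
    unfolding partial_X_def by (intro borel_measurable_sum) (auto intro: borel_measurable_scaleR)
qed

lemma continuous_partial_X:
  assumes "regular \<omega>" "0 \<le> t0"
  shows "uniform_limit UNIV (\<lambda>t. partial_X d e lam G n t \<omega>) (partial_X d e lam G n t0 \<omega>) (at t0 within {0..})"
  unfolding partial_X_def
proof (rule uniform_limit_sum_scaleR)
  fix i assume "i \<in> {1..n}"
  then have G: "continuous_on {0..} (\<lambda>t. G i t \<omega>)" and "0 < lam i"
    using assms lam_gt_0 by (auto simp: regular_def)
  have "continuous_on {0..} (\<lambda>t. G i (lam i * t) \<omega>)"
    by (rule continuous_on_compose2[OF G, where f="\<lambda>t. lam i * t"])
       (use \<open>0 < lam i\<close> in auto)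
  then show "((\<lambda>t. G i (lam i * t) \<omega>) \<longlongrightarrow> G i (lam i * t0) \<omega>) (at t0 within {0..})"
    using assms(2) by (auto simp: continuous_on_def)
  show "bounded (range (schauder_S d e i))"
    using norm_schauder_S_le by (auto simp: bounded_iff)
qed simp

end

text \<open>The event \<open>R\<close> stands in for \<open>{\<omega>. regular \<omega>}\<close>, which need not be measurable;
  setting the limit to \<open>0\<close> off \<open>R\<close> keeps it measurable and in \<open>C0\<close> everywhere.\<close>

locale schauder_ou_series_on_regular = schauder_ou_series M d e lam W G x
  for M :: "'w measure" and d e and lam :: "nat \<Rightarrow> real" and W G x +
  fixes R :: "'w set"
  assumes R_sets: "R \<in> sets M" and AE_R: "AE \<omega> in M. \<omega> \<in> R" and R_regular: "\<And>\<omega>. \<omega> \<in> R \<Longrightarrow> regular \<omega>"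
begin

definition X :: "real \<Rightarrow> 'w \<Rightarrow> real \<Rightarrow> 'a" where
  "X t \<omega> = (if \<omega> \<in> R then (\<lambda>s. lim (\<lambda>n. partial_X d e lam G n t \<omega> s)) else (\<lambda>_. 0))"

lemma uniform_limit_X:
  "\<omega> \<in> R \<Longrightarrow> uniform_limit ({0..real T} \<times> UNIV) (\<lambda>n (t, s). partial_X d e lam G n t \<omega> s) (\<lambda>(t, s). X t \<omega> s) sequentially"
  using regular_uniform_limit[OF R_regular] by (simp add: X_def case_prod_beta')

lemma uniform_limit_X_at:
  assumes "\<omega> \<in> R" "0 \<le> t"
  shows "uniform_limit UNIV (\<lambda>n. partial_X d e lam G n t \<omega>) (X t \<omega>) sequentially"
  by (rule uniform_limit_section[where f="\<lambda>n t. partial_X d e lam G n t \<omega>" and g="\<lambda>t. X t \<omega>",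
        OF uniform_limit_X[OF assms(1), of "nat \<lceil>t\<rceil>"]])
     (use assms in \<open>auto simp: real_nat_ceiling_ge\<close>)

lemma X_in_C0:
  assumes "0 \<le> t"
  shows "X t \<omega> \<in> C0"
proof (cases "\<omega> \<in> R")
  case True
  note lim = uniform_limit_X_at[OF True assms]
  have "continuous_on {0..1} (X t \<omega>)"
    using partial_X_in_C0 unfolding C0_def
    by (intro uniform_limit_theorem[OF _ uniform_limit_on_subset[OF lim]]) auto
  moreover have "X t \<omega> s = 0" if "s = 0 \<or> s \<notin> {0..1}" for s
    using partial_X_in_C0 that tendsto_uniform_limitI[OF lim, of s]
    by (auto simp: C0_def intro: LIMSEQ_unique[OF _ tendsto_const])
  ultimately show ?thesis unfolding C0_def by auto
qed (simp add: X_def C0_def)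

lemma measurable_X:
  assumes "0 \<le> t"
  shows "(\<lambda>\<omega>. X t \<omega> s) \<in> borel_measurable M"
proof (rule borel_measurable_LIMSEQ_metric)
  show "(\<lambda>\<omega>. if \<omega> \<in> R then partial_X d e lam G n t \<omega> s else 0) \<in> borel_measurable M" for n
    using R_sets by (intro measurable_If_set measurable_partial_X assms borel_measurable_const) auto
  show "(\<lambda>n. if \<omega> \<in> R then partial_X d e lam G n t \<omega> s else 0) \<longlonglongrightarrow> X t \<omega> s" for \<omega>
    using tendsto_uniform_limitI[OF uniform_limit_X_at[OF _ assms]] by (simp add: X_def)
qed

lemma continuous_X:
  assumes "0 \<le> t0"
  shows "uniform_limit {0..1} (\<lambda>t. X t \<omega>) (X t0 \<omega>) (at t0 within {0..})"
proof (cases "\<omega> \<in> R")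
  case True
  define T where "T = nat \<lceil>t0\<rceil> + 1"
  have "t0 < real T" unfolding T_def by linarith
  then have at_eq: "at t0 within {0..real T} = at t0 within {0..}"
    by (intro at_within_nhd[where S="{..<real T}"]) auto
  have "uniform_limit {0..1} (\<lambda>t. X t \<omega>) (X t0 \<omega>) (at t0 within {0..real T})"
  proof (rule uniform_limit_at_within_of_uniform_limit[where f="\<lambda>n t. partial_X d e lam G n t \<omega>"])
    show "uniform_limit ({0..real T} \<times> {0..1}) (\<lambda>n (t, s). partial_X d e lam G n t \<omega> s) (\<lambda>(t, s). X t \<omega> s)
        sequentially"
      by (rule uniform_limit_on_subset[OF uniform_limit_X[OF True]]) auto
    show "uniform_limit {0..1} (\<lambda>t. partial_X d e lam G n t \<omega>) (partial_X d e lam G n t0 \<omega>) (at t0 within {0..real T})"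
      for n
      unfolding at_eq using continuous_partial_X[OF R_regular[OF True] assms]
      by (rule uniform_limit_on_subset) auto
  qed (use assms \<open>t0 < real T\<close> in auto)
  then show ?thesis unfolding at_eq .
qed (simp add: X_def uniform_limit_const)

lemma tupledist_partial_X_tendsto:
  assumes "\<omega> \<in> R" "\<forall>t\<in>set ts. 0 \<le> t"
  shows "(\<lambda>n. tupledist (map (\<lambda>t. X t \<omega>) ts) (map (\<lambda>t. partial_X d e lam G n t \<omega>) ts)) \<longlonglongrightarrow> 0"
proof (rule tendstoI)
  fix \<epsilon> :: real assume "0 < \<epsilon>"
  define T where "T = nat \<lceil>Max (insert 0 (set ts))\<rceil>"
  have ts_T: "t \<in> {0..real T}" if "t \<in> set ts" for t
  proof -
    have "t \<le> Max (insert 0 (set ts))" using that by (intro Max_ge) auto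
    also have "\<dots> \<le> real T" unfolding T_def by (rule real_nat_ceiling_ge)
    finally show ?thesis using that assms(2) by auto
  qed
  from uniform_limitD[OF uniform_limit_X[OF assms(1), of T], of "\<epsilon> / 2"] \<open>0 < \<epsilon>\<close>
  have "\<forall>\<^sub>F n in sequentially. \<forall>t\<in>set ts. \<forall>s. norm (X t \<omega> s - partial_X d e lam G n t \<omega> s) \<le> \<epsilon> / 2"
    by (auto elim!: eventually_mono dest: ts_T simp: dist_norm norm_minus_commute less_imp_le)
  then show "\<forall>\<^sub>F n in sequentially. dist (tupledist (map (\<lambda>t. X t \<omega>) ts) (map (\<lambda>t. partial_X d e lam G n t \<omega>) ts)) 0 < \<epsilon>"
  proof (rule eventually_mono)
    fix n assume "\<forall>t\<in>set ts. \<forall>s. norm (X t \<omega> s - partial_X d e lam G n t \<omega> s) \<le> \<epsilon> / 2"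
    then have "tupledist (map (\<lambda>t. X t \<omega>) ts) (map (\<lambda>t. partial_X d e lam G n t \<omega>) ts) \<le> \<epsilon> / 2"
      using \<open>0 < \<epsilon>\<close> by (intro tupledist_le) auto
    then show "dist (tupledist (map (\<lambda>t. X t \<omega>) ts) (map (\<lambda>t. partial_X d e lam G n t \<omega>) ts)) 0 < \<epsilon>"
      using \<open>0 < \<epsilon>\<close> tupledist_nonneg[of "map (\<lambda>t. X t \<omega>) ts" "map (\<lambda>t. partial_X d e lam G n t \<omega>) ts"]
      by (simp add: dist_real_def)
  qed
qed

lemma measurable_bcont_test_partial_X:
  assumes F: "bcont_test (length ts) F" and ts: "\<forall>t\<in>set ts. 0 \<le> t"
  shows "(\<lambda>\<omega>. F (map (\<lambda>t. partial_X d e lam G n t \<omega>) ts)) \<in> borel_measurable M"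
proof -
  define m where "m = length ts"
  define \<Phi> where "\<Phi> v = map (\<lambda>p s. \<Sum>i\<in>{1..n}. v (i, p) *\<^sub>R schauder_S d e i s) [0..<m]"
    for v :: "nat \<times> nat \<Rightarrow> real"
  define V where "V \<omega> ip = (if 1 \<le> fst ip \<and> snd ip < m then G (fst ip) (lam (fst ip) * ts ! snd ip) \<omega> else 0)"
    for \<omega> ip
  have "map (\<lambda>t. partial_X d e lam G n t \<omega>) ts = \<Phi> (V \<omega>)" for \<omega>
    by (rule nth_equalityI) (auto simp: \<Phi>_def V_def m_def partial_X_def intro!: sum.cong)
  moreover have "(\<lambda>\<omega>. F (\<Phi> (V \<omega>))) \<in> borel_measurable M"
  proof (rule measurable_bcont_test_comp[OF F[folded m_def]])
    show "\<Phi> v \<in> C0_tuples m" for v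
      unfolding \<Phi>_def C0_tuples_def by (auto intro!: sum_scaleR_in_C0 schauder_S_in_C0)
    show "(\<lambda>k. tupledist (\<Phi> v) (\<Phi> (u k))) \<longlonglongrightarrow> 0" if u: "\<And>j. (\<lambda>k. u k j) \<longlonglongrightarrow> v j" for u v
    proof (rule real_tendsto_sandwich[OF _ _ tendsto_const])
      have "(\<lambda>k. \<Sum>p<m. \<Sum>i\<in>{1..n}. \<bar>v (i, p) - u k (i, p)\<bar>) \<longlonglongrightarrow> (\<Sum>p<m. \<Sum>i\<in>{1..n}. \<bar>v (i, p) - v (i, p)\<bar>)"
        by (intro tendsto_intros u)
      then show "(\<lambda>k. \<Sum>p<m. \<Sum>i\<in>{1..n}. \<bar>v (i, p) - u k (i, p)\<bar>) \<longlonglongrightarrow> 0" by simp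
      show "\<forall>\<^sub>F k in sequentially. tupledist (\<Phi> v) (\<Phi> (u k)) \<le> (\<Sum>p<m. \<Sum>i\<in>{1..n}. \<bar>v (i, p) - u k (i, p)\<bar>)"
        unfolding \<Phi>_def using norm_schauder_S_le by (intro always_eventually allI tupledist_sum_scaleR_le) auto
    qed (simp add: tupledist_nonneg)
    show "(\<lambda>\<omega>. V \<omega> j) \<in> borel_measurable M" for j
      using ou[of "fst j"] lam_gt_0[of "fst j"] ts
      by (cases "1 \<le> fst j \<and> snd j < m") (auto simp: V_def ou_process_def m_def)
  qed
  ultimately show ?thesis by simp
qed

lemma measurable_bcont_test_X:
  assumes F: "bcont_test (length ts) F" and ts: "\<forall>t\<in>set ts. 0 \<le> t"
  shows "(\<lambda>\<omega>. F (map (\<lambda>t. X t \<omega>) ts)) \<in> borel_measurable M"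
proof (rule borel_measurable_LIMSEQ_real)
  define Z where "Z n \<omega> = map (\<lambda>t. partial_X d e lam G n t \<omega>) ts" for n \<omega>
  show "(\<lambda>\<omega>. if \<omega> \<in> R then F (Z n \<omega>) else F (map (\<lambda>t s. 0) ts)) \<in> borel_measurable M" for n
    unfolding Z_def using R_sets
    by (intro measurable_If_set measurable_bcont_test_partial_X F ts borel_measurable_const) auto
  show "(\<lambda>n. if \<omega> \<in> R then F (Z n \<omega>) else F (map (\<lambda>t s. 0) ts)) \<longlonglongrightarrow> F (map (\<lambda>t. X t \<omega>) ts)" for \<omega>
  proof (cases "\<omega> \<in> R")
    case True
    have "Z n \<omega> \<in> C0_tuples (length ts)" "map (\<lambda>t. X t \<omega>) ts \<in> C0_tuples (length ts)" for n
      using partial_X_in_C0 X_in_C0 ts by (auto simp: Z_def C0_tuples_def)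
    with True show ?thesis
      using bcont_test_tendsto[OF F _ _ tupledist_partial_X_tendsto[OF True ts]] by (simp add: Z_def)
  qed (simp add: X_def)
qed

lemma weak_conv_fdd:
  assumes "\<forall>t\<in>set ts. 0 \<le> t"
  shows "weak_conv_C0_tuples M (length ts)
           (\<lambda>n \<omega>. map (\<lambda>t. partial_X d e lam G n t \<omega>) ts) (\<lambda>\<omega>. map (\<lambda>t. X t \<omega>) ts)"
  using partial_X_in_C0 X_in_C0 assms AE_R
  by (intro weak_conv_C0_tuples_of_AE_tendsto[OF prob_space_axioms] measurable_bcont_test_partial_X
        measurable_bcont_test_X) (auto simp: C0_tuples_def intro: tupledist_partial_X_tendsto)

end

theorem proposition2p5:
  fixes M :: "'w measure"
    and d :: nat
    and e :: "nat \<Rightarrow> 'a::euclidean_space"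
    and lam :: "nat \<Rightarrow> real"
    and W G :: "nat \<Rightarrow> real \<Rightarrow> 'w \<Rightarrow> real"
    and x :: "nat \<Rightarrow> real"
  assumes "prob_space M"
    and dim: "DIM('a) = d"
    and basis: "bij_betw e {1..d} Basis"
    and lam_pos: "0 < lam 1"
    and lam_mono: "\<And>i j. 1 \<le> i \<Longrightarrow> i \<le> j \<Longrightarrow> lam i \<le> lam j"
    and wiener: "\<And>i. 1 \<le> i \<Longrightarrow> wiener_process M (W i)"
    and indep: "prob_space.indep_vars M (\<lambda>_. Pi\<^sub>M {0..} (\<lambda>_. borel))
                  (\<lambda>i \<omega>. restrict (\<lambda>t. W i t \<omega>) {0..}) {1..}"
    and ou: "\<And>i. 1 \<le> i \<Longrightarrow> ou_process M (W i) (x i) (G i)"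
    and sum1: "summable (\<lambda>m::nat. 2 powr (- real m / 2) * lam (d * 2 ^ m) * sqrt (real m))"
    and sum2: "summable (\<lambda>m::nat. 2 powr (- real m / 2)
                 * (MAX i\<in>{d * 2 ^ m <.. d * 2 ^ (m + 1)}. \<bar>x i\<bar>) * lam (d * 2 ^ m))"
  shows "\<exists>Y :: real \<Rightarrow> 'w \<Rightarrow> real \<Rightarrow> 'a.
           \<comment> \<open>(a) Y is a C_0-valued process with continuous paths ...\<close>
           (\<forall>t\<ge>0. \<forall>s. (\<lambda>\<omega>. Y t \<omega> s) \<in> borel_measurable M) \<and>
           (\<forall>\<omega>\<in>space M. \<forall>t\<ge>0. Y t \<omega> \<in> C0) \<and>
           (\<forall>\<omega>\<in>space M. \<forall>t0\<ge>0. uniform_limit {0..1} (\<lambda>t. Y t \<omega>) (Y t0 \<omega>) (at t0 within {0..})) \<and>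
           \<comment> \<open>... which is a modification of X_t = sum_i G_i(lam_i t) S_i (series convergent a.s. in C_0)\<close>
           (\<forall>t\<ge>0. AE \<omega> in M. uniform_limit {0..1} (\<lambda>n. partial_X d e lam G n t \<omega>) (Y t \<omega>) sequentially) \<and>
           \<comment> \<open>(b) convergence of finite dimensional distributions\<close>
           (\<forall>ts :: real list. sorted_wrt (<) ts \<longrightarrow> (\<forall>t\<in>set ts. 0 \<le> t) \<longrightarrow>
              weak_conv_C0_tuples M (length ts)
                (\<lambda>n \<omega>. map (\<lambda>t. partial_X d e lam G n t \<omega>) ts)
                (\<lambda>\<omega>. map (\<lambda>t. Y t \<omega>) ts))"
proof -
  have "1 \<le> d" using dim DIM_positive[where 'a='a] by linarith
  moreover have "norm (e j) \<le> 1" if "j \<in> {1..d}" for j using bij_betwE[OF basis] that by auto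
  ultimately have "schauder_ou_series M d e lam W G x"
    using assms by (intro schauder_ou_series.intro schauder_ou_series_axioms.intro)
      (simp_all add: level_indices_def)
  then interpret schauder_ou_series M d e lam W G x .
  obtain R where "R \<in> sets M" "AE \<omega> in M. \<omega> \<in> R" "\<And>\<omega>. \<omega> \<in> R \<Longrightarrow> regular \<omega>"
    using obtain_regular_event by blast
  then interpret schauder_ou_series_on_regular M d e lam W G x R
    by (intro schauder_ou_series_on_regular.intro schauder_ou_series_on_regular_axioms.intro)
      (simp_all add: schauder_ou_series_axioms)
  have "\<forall>t\<ge>0. AE \<omega> in M. uniform_limit {0..1} (\<lambda>n. partial_X d e lam G n t \<omega>) (X t \<omega>) sequentially"
    using AE_R by (auto intro: uniform_limit_on_subset[OF uniform_limit_X_at])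
  then show ?thesis
    using measurable_X X_in_C0 continuous_X weak_conv_fdd by blast
qed

end
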